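(* Let $H\in(0,1/2]$ and $\rho\in(-1,1)$. The ordinary differential equation $$g'(y)^2\left(1+2\rho\frac{y}{2H+1}+\frac{y^2}{(2H+1)^2}\right) = 1-(1-2H)\left(1-\frac{y g'(y)}{g(y)}\right),\qquad g(0)=0,\quad g'(0)>0,$$ has a unique $C^1$ solution $g$ on $\mathbb{R}$. This solution is $C^2$, satisfies, as $y\to0$, $$g(y)=g'(0)y+g''(0)\tfrac{y^2}{2}+O(y^3),\quad g'(y)=g'(0)+g''(0)y+O(y^2),\quad g''(y)=g''(0)+O(y),$$ and satisfies $g(y)/y>0$ for all $y\neq0$. *)

theory Defs
  imports "HOL-Analysis.Analysis" "HOL-Library.Landau_Symbols"
begin

definition C1_real :: "(real \<Rightarrow> real) \<Rightarrow> bool" where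
  "C1_real g \<longleftrightarrow> (\<forall>y. g differentiable (at y)) \<and> continuous_on UNIV (deriv g)"

definition C2_real :: "(real \<Rightarrow> real) \<Rightarrow> bool" where
  "C2_real g \<longleftrightarrow> C1_real g \<and> C1_real (deriv g)"

definition ode_sol :: "real \<Rightarrow> real \<Rightarrow> (real \<Rightarrow> real) \<Rightarrow> bool" where
  "ode_sol H \<rho> g \<longleftrightarrow> C1_real g \<and> g 0 = 0 \<and> deriv g 0 > 0 \<and>
     (\<forall>y. y \<noteq> 0 \<longrightarrow> g y \<noteq> 0 \<and>
        (deriv g y)\<^sup>2 * (1 + 2 * \<rho> * y / (2 * H + 1) + y\<^sup>2 / (2 * H + 1)\<^sup>2)
          = 1 - (1 - 2 * H) * (1 - y * deriv g y / g y))"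

end

(* Writing u = g y / y and h = g' y, the equation says that h is the positive root
   slope H (qpoly H rho y) u of a quadratic whose coefficients depend on u. On y \<ge> 0 the problem
   thus becomes the fixed-point equation u y = (1 / y) * integral over [0, y] of
   slope H (qpoly H rho s) (u s), with u 0 = 1. The averaging map is Lipschitz in u with
   constant (1 - 2 H) / (Q u1 u2), where Q = qpoly H rho s; this is below 1 near 0, where u is
   close to 1, and bounded elsewhere, so the map contracts in a sup norm with weight exp (- la y)
   for large la. Banach's theorem on a closed set encoding u = 1 + c y + O(y\<^sup>2) gives existence
   together with the expansion at 0, and the same weighted estimate on compact intervals gives
   uniqueness among all positive continuous solutions. The reflection g y \<mapsto> - g (- y),
   rho \<mapsto> - rho reduces y \<le> 0 to y \<ge> 0, and implicit differentiation of the quadratic relation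
   yields g \<in> C\<^sup>2 and the expansions of g' and g''. *)

theory Submission
  imports Defs
begin

section \<open>The slope relation\<close>

definition qpoly :: "real \<Rightarrow> real \<Rightarrow> real \<Rightarrow> real" where
  "qpoly H \<rho> y = 1 + 2 * \<rho> * y / (2 * H + 1) + y\<^sup>2 / (2 * H + 1)\<^sup>2"

(* With u = g y / y and h = g' y, the equation of ode_sol at y \<noteq> 0 reads
   slope_poly H (qpoly H \<rho> y) u h = 0. *)
definition slope_poly :: "real \<Rightarrow> real \<Rightarrow> real \<Rightarrow> real \<Rightarrow> real" where
  "slope_poly H q u h = q * u * h\<^sup>2 - (1 - 2 * H) * h - 2 * H * u"

definition slope :: "real \<Rightarrow> real \<Rightarrow> real \<Rightarrow> real" where
  "slope H q u = ((1 - 2 * H) + sqrt ((1 - 2 * H)\<^sup>2 + 8 * H * q * u\<^sup>2)) / (2 * q * u)"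

lemma qpoly_ge:
  assumes "0 < H" "\<bar>\<rho>\<bar> < 1"
  shows "(1 - \<bar>\<rho>\<bar>) * (1 + (y / (2 * H + 1))\<^sup>2) \<le> qpoly H \<rho> y"
proof -
  define t where "t = y / (2 * H + 1)"
  have Q: "qpoly H \<rho> y = 1 + 2 * \<rho> * t + t\<^sup>2"
    unfolding qpoly_def t_def using assms by (simp add: power_divide)
  have "2 * \<bar>t\<bar> \<le> 1 + t\<^sup>2"
    using sum_squares_bound[of 1 "\<bar>t\<bar>"] by (simp add: power2_eq_square)
  then have "\<bar>\<rho>\<bar> * (2 * \<bar>t\<bar>) \<le> \<bar>\<rho>\<bar> * (1 + t\<^sup>2)"
    by (simp add: mult_left_mono)
  moreover have "\<bar>2 * \<rho> * t\<bar> = \<bar>\<rho>\<bar> * (2 * \<bar>t\<bar>)"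
    by (simp add: abs_mult)
  ultimately show ?thesis
    unfolding Q t_def[symmetric] by (simp add: algebra_simps)
qed

lemma qpoly_pos:
  assumes "0 < H" "\<bar>\<rho>\<bar> < 1"
  shows qpoly_ge_1_minus_abs: "1 - \<bar>\<rho>\<bar> \<le> qpoly H \<rho> y" and "0 < qpoly H \<rho> y"
proof -
  have "1 - \<bar>\<rho>\<bar> \<le> (1 - \<bar>\<rho>\<bar>) * (1 + (y / (2 * H + 1))\<^sup>2)"
    using assms by (simp add: mult_le_cancel_left1)
  then show "1 - \<bar>\<rho>\<bar> \<le> qpoly H \<rho> y"
    using qpoly_ge[OF assms, of y] by linarith
  then show "0 < qpoly H \<rho> y"
    using assms by linarith
qed

lemma qpoly_minus: "qpoly H (- \<rho>) (- y) = qpoly H \<rho> y"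
  unfolding qpoly_def by simp

lemma qpoly_0 [simp]: "qpoly H \<rho> 0 = 1"
  unfolding qpoly_def by simp

lemma qpoly_le:
  assumes "0 < H" "\<bar>\<rho>\<bar> < 1" "0 \<le> s" "s \<le> y"
  shows "qpoly H \<rho> s \<le> 2 * qpoly H \<rho> y / (1 - \<bar>\<rho>\<bar>)"
proof -
  define t T where "t = s / (2 * H + 1)" and "T = y / (2 * H + 1)"
  have tT: "0 \<le> t" "t \<le> T"
    using assms by (auto simp: t_def T_def divide_right_mono)
  have "qpoly H \<rho> s = 1 + 2 * \<rho> * t + t\<^sup>2"
    unfolding qpoly_def t_def using assms by (simp add: power_divide)
  also have "\<dots> \<le> 2 * (1 + T\<^sup>2)"
  proof -
    have "\<rho> * t \<le> 1 * t"
      using assms tT by (intro mult_right_mono) auto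
    then have "2 * \<rho> * t \<le> 2 * t"
      by simp
    moreover have "2 * t \<le> 1 + t\<^sup>2"
      using sum_squares_bound[of 1 t] by (simp add: power2_eq_square)
    moreover have "t\<^sup>2 \<le> T\<^sup>2"
      using tT by (simp add: power_mono)
    ultimately show ?thesis
      by (simp add: distrib_left)
  qed
  also have "\<dots> \<le> 2 * qpoly H \<rho> y / (1 - \<bar>\<rho>\<bar>)"
    using qpoly_ge[OF assms(1,2), of y] assms by (simp add: T_def field_simps)
  finally show ?thesis .
qed

lemma qpoly_has_real_derivative:
  "(qpoly H \<rho> has_real_derivative 2 * \<rho> / (2 * H + 1) + 2 * y / (2 * H + 1)\<^sup>2) (at y)"
proof -
  define a where "a = 2 * H + 1"
  have "qpoly H \<rho> = (\<lambda>y. 1 + 2 * \<rho> / a * y + 1 / a\<^sup>2 * y\<^sup>2)"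
    by (simp add: fun_eq_iff qpoly_def a_def)
  moreover have "((\<lambda>y. 1 + 2 * \<rho> / a * y + 1 / a\<^sup>2 * y\<^sup>2) has_real_derivative
      0 + 2 * \<rho> / a * 1 + 1 / a\<^sup>2 * (2 * y ^ 1 * 1)) (at y)"
    by (intro derivative_eq_intros) auto
  ultimately show ?thesis
    by (simp add: a_def)
qed

lemma isCont_qpoly: "isCont (qpoly H \<rho>) y"
  using qpoly_has_real_derivative by (rule DERIV_isCont)

lemma continuous_on_qpoly: "continuous_on S (qpoly H \<rho>)"
  by (simp add: continuous_at_imp_continuous_on isCont_qpoly)

context
  fixes H q u :: real
  assumes H: "0 < H" and q: "0 < q" and u: "0 < u"
begin

lemma slope_pos: "0 < slope H q u"
proof -
  have "\<bar>1 - 2 * H\<bar> < sqrt ((1 - 2 * H)\<^sup>2 + 8 * H * q * u\<^sup>2)"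
    using H q u by (intro real_less_rsqrt) simp
  then have "0 < (1 - 2 * H) + sqrt ((1 - 2 * H)\<^sup>2 + 8 * H * q * u\<^sup>2)"
    by linarith
  then show ?thesis
    unfolding slope_def using q u by simp
qed

lemma slope_poly_slope: "slope_poly H q u (slope H q u) = 0"
proof -
  define b D where "b = 1 - 2 * H" and "D = sqrt (b\<^sup>2 + 8 * H * q * u\<^sup>2)"
  have D2: "D\<^sup>2 = b\<^sup>2 + 8 * H * q * u\<^sup>2"
    unfolding D_def using H q u by simp
  have "slope_poly H q u (slope H q u) = (D\<^sup>2 - b\<^sup>2 - 8 * H * q * u\<^sup>2) / (4 * q * u)"
    unfolding slope_poly_def slope_def b_def[symmetric] D_def[symmetric]
    using q u by (simp add: field_simps power2_eq_square)
  then show ?thesis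
    using D2 by simp
qed

lemma slope_poly_root_dist:
  assumes "0 < h" "slope_poly H q u h = 0" "0 < hs"
  shows "\<bar>h - hs\<bar> \<le> \<bar>slope_poly H q u hs\<bar> / (q * u * hs)"
proof -
  have "(q * u * h - (1 - 2 * H)) * h = 2 * H * u"
    using assms(2) by (simp add: slope_poly_def algebra_simps power2_eq_square)
  then have "0 < q * u * h - (1 - 2 * H)"
    using H u assms(1) by (metis zero_less_mult_pos2 mult_pos_pos zero_less_numeral)
  then have den: "q * u * hs \<le> q * u * (h + hs) - (1 - 2 * H)"
    by (simp add: algebra_simps)
  have "\<bar>h - hs\<bar> * (q * u * hs) \<le> \<bar>h - hs\<bar> * (q * u * (h + hs) - (1 - 2 * H))"
    using den by (simp add: mult_left_mono)
  also have "\<dots> = \<bar>(h - hs) * (q * u * (h + hs) - (1 - 2 * H))\<bar>"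
  proof -
    have "0 < q * u * hs"
      using q u assms(3) by simp
    with den show ?thesis
      by (simp add: abs_mult)
  qed
  also have "(h - hs) * (q * u * (h + hs) - (1 - 2 * H)) = - slope_poly H q u hs"
    using assms(2) by (simp add: slope_poly_def algebra_simps power2_eq_square)
  finally show ?thesis
    using q u assms(3) by (simp add: field_simps)
qed

lemma slope_poly_eq_0_iff:
  assumes "0 < h"
  shows "slope_poly H q u h = 0 \<longleftrightarrow> h = slope H q u"
  using slope_poly_root_dist[OF assms _ slope_pos] slope_poly_slope by auto

lemma slope_poly_dh_pos: "0 < 2 * q * u * slope H q u - (1 - 2 * H)"
proof -
  have "(q * u * slope H q u - (1 - 2 * H)) * slope H q u = 2 * H * u"
    using slope_poly_slope by (simp add: slope_poly_def algebra_simps power2_eq_square)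
  then have "0 < (q * u * slope H q u - (1 - 2 * H)) * slope H q u"
    using H u by simp
  then have "0 < q * u * slope H q u - (1 - 2 * H)"
    using slope_pos by (rule zero_less_mult_pos2)
  moreover have "0 < q * u * slope H q u"
    using q u slope_pos by simp
  ultimately show ?thesis by linarith
qed

end

context
  fixes H q :: real
  assumes H: "0 < H" "H \<le> 1/2" and q: "0 < q"
begin

lemma slope_lipschitz:
  assumes "0 < u1" "0 < u2"
  shows "\<bar>slope H q u1 - slope H q u2\<bar> \<le> (1 - 2 * H) / (q * u1 * u2) * \<bar>u1 - u2\<bar>"
proof -
  define h2 where "h2 = slope H q u2"
  have h2: "0 < h2" "slope_poly H q u2 h2 = 0"
    unfolding h2_def using H q assms by (auto intro: slope_pos slope_poly_slope)
  have "q * h2\<^sup>2 - 2 * H = (1 - 2 * H) * h2 / u2"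
    using h2(2) assms(2) by (simp add: slope_poly_def field_simps)
  moreover have "slope_poly H q u1 h2 = slope_poly H q u1 h2 - slope_poly H q u2 h2"
    using h2(2) by simp
  moreover have "\<dots> = (u1 - u2) * (q * h2\<^sup>2 - 2 * H)"
    unfolding slope_poly_def by (simp add: algebra_simps)
  ultimately have R: "slope_poly H q u1 h2 = (u1 - u2) * ((1 - 2 * H) * h2 / u2)"
    by simp
  have "\<bar>slope H q u1 - h2\<bar> \<le> \<bar>slope_poly H q u1 h2\<bar> / (q * u1 * h2)"
    using H q assms h2 by (intro slope_poly_root_dist slope_pos slope_poly_slope)
  also have "\<dots> = \<bar>u1 - u2\<bar> * ((1 - 2 * H) * h2 / u2) / (q * u1 * h2)"
    unfolding R using H assms h2 by (simp add: abs_mult)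
  also have "\<dots> = (1 - 2 * H) / (q * u1 * u2) * \<bar>u1 - u2\<bar>"
    using q assms h2 by (simp add: field_simps)
  finally show ?thesis
    unfolding h2_def .
qed

lemma sqrt_le_slope:
  assumes "0 < u"
  shows "sqrt (2 * H / q) \<le> slope H q u"
proof -
  define h where "h = slope H q u"
  have h: "0 < h" "slope_poly H q u h = 0"
    unfolding h_def using H q assms by (auto intro: slope_pos slope_poly_slope)
  have "q * u * h\<^sup>2 = (1 - 2 * H) * h + 2 * H * u"
    using h(2) unfolding slope_poly_def by linarith
  moreover have "0 \<le> (1 - 2 * H) * h"
    using H h(1) by simp
  ultimately have "u * (2 * H) \<le> u * (q * h\<^sup>2)"
    by (simp add: algebra_simps)
  then have "2 * H / q \<le> h\<^sup>2"
    using assms q by (simp add: field_simps)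
  then show ?thesis
    using h(1) unfolding h_def[symmetric] by (simp add: real_le_lsqrt)
qed

lemma slope_le:
  assumes "0 < u"
  shows "slope H q u \<le> (1 - 2 * H) / (q * u) + sqrt (2 * H / q)"
proof (rule ccontr)
  define h \<alpha> \<beta> where "h = slope H q u" and "\<alpha> = (1 - 2 * H) / (q * u)" and "\<beta> = 2 * H / q"
  assume "\<not> ?thesis"
  then have gt: "\<alpha> + sqrt \<beta> < h"
    by (simp add: h_def \<alpha>_def \<beta>_def)
  have nonneg: "0 \<le> \<alpha>" "0 \<le> \<beta>"
    using H q assms by (auto simp: \<alpha>_def \<beta>_def)
  have "slope_poly H q u h = 0"
    unfolding h_def using H q assms by (intro slope_poly_slope)
  then have eq: "h * h = \<alpha> * h + \<beta>"
    using q assms by (simp add: slope_poly_def \<alpha>_def \<beta>_def field_simps power2_eq_square)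
  have "0 < h"
    using gt nonneg real_sqrt_ge_zero[of \<beta>] by linarith
  then have "h * (\<alpha> + sqrt \<beta>) < h * h"
    using gt by (intro mult_strict_left_mono)
  moreover have "sqrt \<beta> * sqrt \<beta> \<le> sqrt \<beta> * h"
    using gt nonneg by (intro mult_left_mono) auto
  moreover have "sqrt \<beta> * sqrt \<beta> = \<beta>"
    using nonneg by simp
  moreover have "h * (\<alpha> + sqrt \<beta>) = \<alpha> * h + sqrt \<beta> * h"
    by (simp add: algebra_simps)
  ultimately show False
    using eq by linarith
qed

end

lemma continuous_on_slope:
  assumes "0 < H" "continuous_on S q" "continuous_on S u"
    and "\<And>s. s \<in> S \<Longrightarrow> 0 < q s" "\<And>s. s \<in> S \<Longrightarrow> 0 < u s"
  shows "continuous_on S (\<lambda>s. slope H (q s) (u s))"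
  unfolding slope_def using assms
  by (intro continuous_intros) (auto dest: less_imp_neq[symmetric])

lemma slope_poly_implicit_deriv:
  fixes q u h :: "real \<Rightarrow> real"
  assumes h_cont: "isCont h y" and u_deriv: "(u has_real_derivative u') (at y)"
    and q_deriv: "(q has_real_derivative q') (at y)"
    and root: "\<And>t. slope_poly H (q t) (u t) (h t) = 0"
    and den: "2 * q y * u y * h y - (1 - 2 * H) \<noteq> 0"
  shows "(h has_real_derivative
     (2 * H * u' - q' * u y * (h y)\<^sup>2 - q y * u' * (h y)\<^sup>2) / (2 * q y * u y * h y - (1 - 2 * H))) (at y)"
proof -
  define N where "N t = slope_poly H (q t) (u t) (h y)" for t
  define N' where "N' = q' * u y * (h y)\<^sup>2 + q y * u' * (h y)\<^sup>2 - 2 * H * u'"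
  define D where "D t = q t * u t * (h t + h y) - (1 - 2 * H)" for t
  have N_deriv: "(N has_real_derivative N') (at y)"
    unfolding N_def slope_poly_def N'_def
    by (auto intro!: derivative_eq_intros q_deriv u_deriv simp: algebra_simps)
  have Ny: "N y = 0"
    using root[of y] by (simp add: N_def)
  have "isCont D y"
    unfolding D_def using DERIV_isCont[OF q_deriv] DERIV_isCont[OF u_deriv] h_cont
    by (intro continuous_intros)
  then have D_lim: "(D \<longlongrightarrow> D y) (at y)"
    by (simp add: isCont_def)
  have Dy: "D y = 2 * q y * u y * h y - (1 - 2 * H)"
    by (simp add: D_def algebra_simps)
  (* Subtracting the root relations at t and at y factors out h t - h y. *)
  have factor: "(h t - h y) * D t = - N t" for t
    using root[of t] unfolding D_def N_def slope_poly_def by (simp add: algebra_simps power2_eq_square)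
  have "((\<lambda>t. - ((N t - N y) / (t - y)) / D t) \<longlongrightarrow> - N' / D y) (at y)"
    using N_deriv den Dy by (intro tendsto_intros D_lim) (auto simp: has_field_derivative_iff)
  moreover have "eventually (\<lambda>t. - ((N t - N y) / (t - y)) / D t = (h t - h y) / (t - y)) (at y)"
  proof -
    have "eventually (\<lambda>t. D t \<noteq> 0) (at y)"
      using D_lim den Dy by (intro tendsto_imp_eventually_ne) auto
    moreover have "eventually (\<lambda>t. t \<noteq> y) (at y)"
      by (simp add: eventually_at_filter)
    ultimately show ?thesis
    proof eventually_elim
      case (elim t)
      then have "h t - h y = - N t / D t"
        using factor[of t] by (simp add: field_simps)
      then show ?case
        using Ny by (simp add: divide_divide_eq_left mult.commute)
    qed
  qed
  ultimately have "((\<lambda>t. (h t - h y) / (t - y)) \<longlongrightarrow> - N' / D y) (at y)"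
    by (rule Lim_transform_eventually)
  moreover have "- N' / D y
      = (2 * H * u' - q' * u y * (h y)\<^sup>2 - q y * u' * (h y)\<^sup>2) / (2 * q y * u y * h y - (1 - 2 * H))"
    unfolding Dy N'_def by (simp add: field_simps)
  ultimately show ?thesis
    by (simp add: has_field_derivative_iff)
qed

section \<open>Integral estimates\<close>

lemma has_integral_affine_Icc0:
  fixes c y :: real
  assumes "0 \<le> y"
  shows "((\<lambda>s. 1 + 2 * c * s) has_integral (y + c * y\<^sup>2)) {0..y}"
proof -
  have "((\<lambda>s. 1 + 2 * c * s) has_integral ((\<lambda>s. s + c * s\<^sup>2) y - (\<lambda>s. s + c * s\<^sup>2) 0)) {0..y}"
  proof (rule fundamental_theorem_of_calculus[OF assms])
    fix x
    have "((\<lambda>s. s + c * s\<^sup>2) has_real_derivative (1 + c * (2 * x ^ 1 * 1))) (at x within {0..y})"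
      by (intro derivative_eq_intros) auto
    then show "((\<lambda>s. s + c * s\<^sup>2) has_vector_derivative 1 + 2 * c * x) (at x within {0..y})"
      by (simp add: has_real_derivative_iff_has_vector_derivative algebra_simps)
  qed
  then show ?thesis
    by simp
qed

lemma has_integral_exp_scaled:
  fixes r a b C :: real
  assumes "0 < r" "a \<le> b"
  shows "((\<lambda>s. C * exp (r * s)) has_integral (C * exp (r * b) / r - C * exp (r * a) / r)) {a..b}"
proof (rule fundamental_theorem_of_calculus[OF assms(2)])
  fix x
  have "((\<lambda>s. C * exp (r * s) / r) has_real_derivative (C * (exp (r * x) * (r * 1)) / r)) (at x within {a..b})"
    by (auto intro!: derivative_eq_intros)
  then show "((\<lambda>s. C * exp (r * s) / r) has_vector_derivative C * exp (r * x)) (at x within {a..b})"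
    using assms(1) by (simp add: has_real_derivative_iff_has_vector_derivative)
qed

lemma has_real_derivative_integral_Icc0:
  assumes "continuous_on {0..} f" "0 < y"
  shows "((\<lambda>t. integral {0..t} f) has_real_derivative f y) (at y)"
proof -
  have "continuous_on {0..y+1} f"
    using assms(1) by (rule continuous_on_subset) auto
  then have "((\<lambda>t. integral {0..t} f) has_real_derivative f y) (at y within {0..y+1})"
    using integral_has_real_derivative assms(2) by simp
  moreover have "at y within {0..y+1} = at y"
    using assms(2) by (intro at_within_interior) simp
  ultimately show ?thesis
    by simp
qed

lemma integral_exp_head_le:
  fixes F :: "real \<Rightarrow> real"
  assumes "0 \<le> z" "z \<le> y" "0 < r" "0 \<le> \<kappa>" "0 \<le> M" "continuous_on {0..z} F"
    and "\<And>s. s \<in> {0..z} \<Longrightarrow> F s \<le> \<kappa> * M * exp (r * s)"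
  shows "integral {0..z} F \<le> \<kappa> * M * exp (r * y) * y"
proof -
  have "integral {0..z} F \<le> integral {0..z} (\<lambda>s. \<kappa> * M * exp (r * y))"
  proof (rule integral_le)
    show "F integrable_on {0..z}"
      using assms(6) by (rule integrable_continuous_interval)
    fix s
    assume s: "s \<in> {0..z}"
    then have "F s \<le> \<kappa> * M * exp (r * s)"
      using assms(7) by auto
    also have "\<dots> \<le> \<kappa> * M * exp (r * y)"
      using s assms by (intro mult_left_mono) auto
    finally show "F s \<le> \<kappa> * M * exp (r * y)" .
  qed (rule integrable_continuous_interval, intro continuous_intros)
  also have "\<dots> = \<kappa> * M * exp (r * y) * z"
    using assms by simp
  also have "\<dots> \<le> \<kappa> * M * exp (r * y) * y"
    using assms by (intro mult_left_mono) auto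
  finally show ?thesis .
qed

lemma integral_exp_tail_le:
  fixes F :: "real \<Rightarrow> real"
  assumes "0 < \<delta>" "\<delta> \<le> y" "0 < r" "0 \<le> L" "0 \<le> M" "continuous_on {\<delta>..y} F"
    and "\<And>s. s \<in> {\<delta>..y} \<Longrightarrow> F s \<le> L * M * exp (r * s)"
  shows "integral {\<delta>..y} F \<le> L / (r * \<delta>) * M * exp (r * y) * y"
proof -
  have hi: "((\<lambda>s. L * M * exp (r * s)) has_integral
      (L * M * exp (r * y) / r - L * M * exp (r * \<delta>) / r)) {\<delta>..y}"
    using has_integral_exp_scaled[of r \<delta> y "L * M"] assms by simp
  have "integral {\<delta>..y} F \<le> L * M * exp (r * y) / r - L * M * exp (r * \<delta>) / r"
    using assms by (intro has_integral_le[OF integrable_integral hi] integrable_continuous_interval) auto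
  also have "\<dots> \<le> L / (r * \<delta>) * M * exp (r * y) * \<delta>"
    using assms by (simp add: field_simps)
  also have "\<dots> \<le> L / (r * \<delta>) * M * exp (r * y) * y"
    using assms by (intro mult_left_mono) auto
  finally show ?thesis .
qed

(* The integrand may be large on [\<delta>, y], but there the weight exp (r s) makes its contribution
   small relative to exp (r y) once r \<delta> is large. *)
lemma integral_le_exp_weighted:
  fixes F :: "real \<Rightarrow> real"
  assumes "0 < \<delta>" "0 < r" "0 \<le> L" "0 \<le> \<kappa>" "0 \<le> M" "0 < y"
    and F: "continuous_on {0..y} F"
    and near: "\<And>s. s \<in> {0..y} \<Longrightarrow> s \<le> \<delta> \<Longrightarrow> F s \<le> \<kappa> * M * exp (r * s)"
    and far: "\<And>s. s \<in> {0..y} \<Longrightarrow> F s \<le> L * M * exp (r * s)"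
  shows "integral {0..y} F \<le> (\<kappa> + L / (r * \<delta>)) * M * exp (r * y) * y"
proof -
  have near_integral: "integral {0..z} F \<le> \<kappa> * M * exp (r * y) * y" if "0 \<le> z" "z \<le> min \<delta> y" for z
    using that assms near by (intro integral_exp_head_le) (auto elim: continuous_on_subset)
  have extra: "0 \<le> L / (r * \<delta>) * M * exp (r * y) * y"
    using assms by simp
  have bound_eq: "(\<kappa> + L / (r * \<delta>)) * M * exp (r * y) * y
      = \<kappa> * M * exp (r * y) * y + L / (r * \<delta>) * M * exp (r * y) * y"
    by (simp add: algebra_simps)
  show ?thesis
  proof (cases "y \<le> \<delta>")
    case True
    then have "integral {0..y} F \<le> \<kappa> * M * exp (r * y) * y"
      using near_integral[of y] assms by simp
    with extra bound_eq show ?thesis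
      by linarith
  next
    case False
    have "integral {0..y} F = integral {0..\<delta>} F + integral {\<delta>..y} F"
      using Henstock_Kurzweil_Integration.integral_combine[where a = 0 and c = \<delta> and b = y and f = F]
        False assms integrable_continuous_interval[OF F] by simp
    moreover have "integral {\<delta>..y} F \<le> L / (r * \<delta>) * M * exp (r * y) * y"
      using False assms far by (intro integral_exp_tail_le) (auto elim: continuous_on_subset)
    ultimately show ?thesis
      using near_integral[of \<delta>] bound_eq False assms by simp
  qed
qed

lemma integral_slope_diff_le:
  fixes q u1 u2 :: "real \<Rightarrow> real"
  assumes H: "0 < H" "H \<le> 1/2" and "0 < \<delta>" "0 < r" "0 \<le> \<kappa>" "0 \<le> L" "0 \<le> M" "0 < y"
    and cont: "continuous_on {0..y} q" "continuous_on {0..y} u1" "continuous_on {0..y} u2"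
    and pos: "\<And>s. s \<in> {0..y} \<Longrightarrow> 0 < q s" "\<And>s. s \<in> {0..y} \<Longrightarrow> 0 < u1 s"
      "\<And>s. s \<in> {0..y} \<Longrightarrow> 0 < u2 s"
    and dist: "\<And>s. s \<in> {0..y} \<Longrightarrow> \<bar>u1 s - u2 s\<bar> \<le> M * exp (r * s)"
    and far: "\<And>s. s \<in> {0..y} \<Longrightarrow> (1 - 2 * H) / (q s * u1 s * u2 s) \<le> L"
    and near: "\<And>s. s \<in> {0..y} \<Longrightarrow> s \<le> \<delta> \<Longrightarrow> (1 - 2 * H) / (q s * u1 s * u2 s) \<le> \<kappa>"
  shows "\<bar>integral {0..y} (\<lambda>s. slope H (q s) (u1 s)) - integral {0..y} (\<lambda>s. slope H (q s) (u2 s))\<bar>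
    \<le> (\<kappa> + L / (r * \<delta>)) * M * exp (r * y) * y"
proof -
  define h1 h2 where "h1 = (\<lambda>s. slope H (q s) (u1 s))" and "h2 = (\<lambda>s. slope H (q s) (u2 s))"
  define F where "F s = \<bar>h1 s - h2 s\<bar>" for s
  have h_cont: "continuous_on {0..y} h1" "continuous_on {0..y} h2"
    unfolding h1_def h2_def using H cont pos by (auto intro!: continuous_on_slope)
  then have F_cont: "continuous_on {0..y} F"
    unfolding F_def by (intro continuous_intros)
  have F_le: "F s \<le> C * M * exp (r * s)"
    if "s \<in> {0..y}" "(1 - 2 * H) / (q s * u1 s * u2 s) \<le> C" for s C
  proof -
    have "0 < q s" "0 < u1 s" "0 < u2 s"
      using pos that(1) by auto
    have "F s \<le> (1 - 2 * H) / (q s * u1 s * u2 s) * \<bar>u1 s - u2 s\<bar>"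
      unfolding F_def h1_def h2_def using H pos that by (intro slope_lipschitz) auto
    also have "\<dots> \<le> (1 - 2 * H) / (q s * u1 s * u2 s) * (M * exp (r * s))"
      using H \<open>0 < q s\<close> \<open>0 < u1 s\<close> \<open>0 < u2 s\<close> that dist by (intro mult_left_mono) auto
    also have "\<dots> \<le> C * (M * exp (r * s))"
      using that assms by (intro mult_right_mono) auto
    finally show ?thesis
      by (simp add: mult.assoc)
  qed
  have "\<bar>integral {0..y} h1 - integral {0..y} h2\<bar> = norm (integral {0..y} (\<lambda>s. h1 s - h2 s))"
    using h_cont by (simp add: integral_diff integrable_continuous_interval)
  also have "\<dots> \<le> integral {0..y} F"
    unfolding F_def using h_cont F_cont
    by (intro integral_norm_bound_integral) (auto intro!: integrable_continuous_interval continuous_intros)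
  also have "\<dots> \<le> (\<kappa> + L / (r * \<delta>)) * M * exp (r * y) * y"
    using assms F_cont F_le near far by (intro integral_le_exp_weighted) auto
  finally show ?thesis
    unfolding h1_def h2_def .
qed

lemma exists_contraction_rate:
  fixes \<kappa> L d :: real
  assumes "\<kappa> < 1" "0 \<le> L" "0 < d"
  shows "\<exists>r>0. \<kappa> + L / (r * d) < 1"
proof -
  define r where "r = 2 * (L + 1) / (d * (1 - \<kappa>))"
  have r: "0 < r"
    unfolding r_def using assms by simp
  have "r * d = 2 * (L + 1) / (1 - \<kappa>)"
    unfolding r_def using assms by (simp add: field_simps)
  then have "L / (r * d) = L * (1 - \<kappa>) / (2 * (L + 1))"
    by simp
  also have "\<dots> \<le> (L + 1) * (1 - \<kappa>) / (2 * (L + 1))"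
    using assms by (intro divide_right_mono mult_right_mono) auto
  also have "\<dots> = (1 - \<kappa>) / 2"
    using assms
    by (metis mult.commute nonzero_mult_divide_mult_cancel_left add_nonneg_pos zero_less_one less_irrefl)
  also have "\<dots> < 1 - \<kappa>"
    using assms by simp
  finally show ?thesis
    using r by (intro exI[of _ r]) auto
qed

section \<open>Functions that are Lipschitz at zero\<close>

definition lip_at0 :: "(real \<Rightarrow> real) \<Rightarrow> real \<Rightarrow> bool" where
  "lip_at0 f a \<longleftrightarrow> (\<lambda>t. f t - a) \<in> O[at 0](\<lambda>t. t)"

lemma lip_at0I:
  assumes "0 < d" "\<And>t. t \<noteq> 0 \<Longrightarrow> \<bar>t\<bar> < d \<Longrightarrow> \<bar>f t - a\<bar> \<le> C * \<bar>t\<bar>"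
  shows "lip_at0 f a"
  unfolding lip_at0_def
proof (rule bigoI)
  show "eventually (\<lambda>t. norm (f t - a) \<le> C * norm t) (at (0::real))"
    unfolding eventually_at using assms by (intro exI[of _ d]) (auto simp: dist_real_def)
qed

lemma lip_at0_tendsto:
  assumes "lip_at0 f a"
  shows "(f \<longlongrightarrow> a) (at 0)"
proof -
  obtain C where ev: "eventually (\<lambda>t. norm (f t - a) \<le> C * \<bar>t\<bar>) (at (0::real))"
    using assms unfolding lip_at0_def by (elim landau_o.bigE) (simp add: real_norm_def)
  have "((\<lambda>t. C * \<bar>t\<bar>) \<longlongrightarrow> C * \<bar>0\<bar>) (at (0::real))"
    by (intro tendsto_intros)
  then have "((\<lambda>t. C * \<bar>t\<bar>) \<longlongrightarrow> 0) (at (0::real))"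
    by simp
  from Lim_null_comparison[OF ev this] show ?thesis
    by (simp add: LIM_zero_iff)
qed

lemma lip_at0_const: "lip_at0 (\<lambda>t. a) a"
  by (rule lip_at0I[of 1 _ _ 0]) auto

lemma lip_at0_ident: "lip_at0 (\<lambda>t. t) 0"
  by (rule lip_at0I[of 1 _ _ 1]) auto

lemma lip_at0_add:
  assumes "lip_at0 f a" "lip_at0 g b"
  shows "lip_at0 (\<lambda>t. f t + g t) (a + b)"
proof -
  have "(\<lambda>t. (f t - a) + (g t - b)) \<in> O[at 0](\<lambda>t. t)"
    using assms unfolding lip_at0_def by (rule sum_in_bigo)
  then show ?thesis
    unfolding lip_at0_def by (simp add: algebra_simps)
qed

lemma lip_at0_diff:
  assumes "lip_at0 f a" "lip_at0 g b"
  shows "lip_at0 (\<lambda>t. f t - g t) (a - b)"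
proof -
  have "(\<lambda>t. (f t - a) - (g t - b)) \<in> O[at 0](\<lambda>t. t)"
    using assms unfolding lip_at0_def by (rule sum_in_bigo)
  then show ?thesis
    unfolding lip_at0_def by (simp add: algebra_simps)
qed

lemma lip_at0_cmult:
  assumes "lip_at0 f a"
  shows "lip_at0 (\<lambda>t. c * f t) (c * a)"
proof -
  have "(\<lambda>t. c * (f t - a)) \<in> O[at 0](\<lambda>t. t)"
    using assms unfolding lip_at0_def by (cases "c = 0") auto
  then show ?thesis
    unfolding lip_at0_def by (simp add: right_diff_distrib)
qed

lemma lip_at0_mult:
  assumes f: "lip_at0 f a" and g: "lip_at0 g b"
  shows "lip_at0 (\<lambda>t. f t * g t) (a * b)"
proof -
  have sq: "\<bar>t * t\<bar> \<le> 1 * \<bar>t\<bar>" if "\<bar>t\<bar> < 1" for t :: real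
    using that mult_right_mono[of "\<bar>t\<bar>" 1 "\<bar>t\<bar>"] by (simp add: abs_mult)
  have "(\<lambda>t::real. t * t) \<in> O[at 0](\<lambda>t. t)"
  proof (rule bigoI)
    show "eventually (\<lambda>t::real. norm (t * t) \<le> 1 * norm t) (at 0)"
      unfolding eventually_at using sq by (intro exI[of _ 1]) (auto simp: dist_real_def)
  qed
  with landau_o.big.mult[OF f[unfolded lip_at0_def] g[unfolded lip_at0_def]]
  have "lip_at0 (\<lambda>t. (f t - a) * (g t - b)) 0"
    unfolding lip_at0_def by (simp add: landau_o.big_trans)
  then have "lip_at0 (\<lambda>t. (f t - a) * (g t - b) + a * g t + b * f t - a * b) (0 + a * b + b * a - a * b)"
    by (intro lip_at0_add lip_at0_diff lip_at0_cmult lip_at0_const f g)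
  then show ?thesis
    by (simp add: algebra_simps)
qed

lemma lip_at0_inverse:
  assumes g: "lip_at0 g b" and "b \<noteq> 0"
  shows "lip_at0 (\<lambda>t. 1 / g t) (1 / b)"
proof -
  have "eventually (\<lambda>t. \<bar>g t - b\<bar> < \<bar>b\<bar> / 2) (at 0)"
    using lip_at0_tendsto[OF g] assms(2) by (intro order_tendstoD(2)[OF tendsto_rabs_zero]) (auto simp: LIM_zero)
  then have "eventually (\<lambda>t. \<bar>b\<bar> / 2 \<le> \<bar>g t\<bar>) (at 0)"
    by eventually_elim linarith
  then have "eventually (\<lambda>t. norm (1 / g t - 1 / b) \<le> (2 / b\<^sup>2) * norm (g t - b)) (at 0)"
  proof eventually_elim
    case (elim t)
    then have "g t \<noteq> 0"
      using assms(2) by auto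
    then have "norm (1 / g t - 1 / b) = \<bar>g t - b\<bar> / (\<bar>g t\<bar> * \<bar>b\<bar>)"
      using assms(2) by (simp add: field_simps abs_mult flip: abs_minus_commute)
    also have "\<dots> \<le> \<bar>g t - b\<bar> / (\<bar>b\<bar> / 2 * \<bar>b\<bar>)"
      using elim assms(2) \<open>g t \<noteq> 0\<close>
      by (intro divide_left_mono mult_right_mono) (auto simp: zero_less_mult_iff)
    also have "\<dots> = (2 / b\<^sup>2) * norm (g t - b)"
      by (simp add: power2_eq_square abs_mult_self_eq)
    finally show ?case .
  qed
  then have "(\<lambda>t. 1 / g t - 1 / b) \<in> O[at 0](\<lambda>t. g t - b)"
    by (rule bigoI)
  then show ?thesis
    using g unfolding lip_at0_def by (rule landau_o.big_trans)
qed

lemma lip_at0_divide: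
  "lip_at0 f a \<Longrightarrow> lip_at0 g b \<Longrightarrow> b \<noteq> 0 \<Longrightarrow> lip_at0 (\<lambda>t. f t / g t) (a / b)"
  using lip_at0_mult[OF _ lip_at0_inverse] by (simp add: divide_inverse)

lemma has_real_derivative_at0I:
  fixes f :: "real \<Rightarrow> real"
  assumes "0 < d" "\<And>t. \<bar>t\<bar> < d \<Longrightarrow> \<bar>f t - f 0 - D * t\<bar> \<le> C * t\<^sup>2"
  shows "(f has_real_derivative D) (at 0)"
proof -
  have "lip_at0 (\<lambda>t. (f t - f 0) / t) D"
  proof (rule lip_at0I[OF assms(1)])
    fix t :: real
    assume t: "t \<noteq> 0" "\<bar>t\<bar> < d"
    show "\<bar>(f t - f 0) / t - D\<bar> \<le> C * \<bar>t\<bar>"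
    proof -
      have "(f t - f 0) / t - D = (f t - f 0 - D * t) / t"
        using t by (simp add: field_simps)
      then have "\<bar>(f t - f 0) / t - D\<bar> = \<bar>f t - f 0 - D * t\<bar> / \<bar>t\<bar>"
        by (simp add: abs_divide)
      also have "\<dots> \<le> C * t\<^sup>2 / \<bar>t\<bar>"
        using assms(2) t by (intro divide_right_mono) auto
      also have "\<dots> = C * \<bar>t\<bar>"
        using t
        by (metis abs_mult_self_eq divide_divide_eq_right nonzero_mult_div_cancel_right
            power2_eq_square times_divide_eq_right zero_less_abs_iff less_irrefl)
      finally show ?thesis .
    qed
  qed
  then show ?thesis
    using lip_at0_tendsto by (simp add: has_field_derivative_iff)
qed

lemma continuous_on_difference_quotient_Ici:
  fixes F :: "real \<Rightarrow> real"
  assumes F0: "F 0 = 0" and F_deriv: "\<And>y. 0 \<le> y \<Longrightarrow> (F has_real_derivative k y) (at y)"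
  shows "continuous_on {0..} (\<lambda>y. if y = 0 then k 0 else F y / y)"
proof -
  define W where "W y = (if y = 0 then k 0 else F y / y)" for y
  have "isCont W y" if "0 \<le> y" for y
  proof (cases "y = 0")
    case True
    have "((\<lambda>y. (F y - F 0) / (y - 0)) \<longlongrightarrow> k 0) (at 0)"
      using F_deriv[of 0] by (simp add: has_field_derivative_iff)
    moreover have "eventually (\<lambda>t. (F t - F 0) / (t - 0) = W t) (at 0)"
      using F0 by (simp add: eventually_at_filter W_def)
    ultimately have "(W \<longlongrightarrow> k 0) (at 0)"
      by (rule Lim_transform_eventually)
    then show ?thesis
      using True by (simp add: isCont_def W_def)
  next
    case False
    then have "isCont (\<lambda>y. F y / y) y"
      using DERIV_isCont[OF F_deriv[OF that]] by (intro continuous_intros) auto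
    moreover have "eventually (\<lambda>t. t \<noteq> 0) (nhds y)"
      using eventually_nhds_in_open[of "- {0}" y] False by auto
    then have "eventually (\<lambda>t. F t / t = W t) (nhds y)"
      by (rule eventually_mono) (simp add: W_def)
    ultimately show ?thesis
      by (subst (asm) isCont_cong) auto
  qed
  then show ?thesis
    unfolding W_def[symmetric] by (simp add: continuous_at_imp_continuous_on)
qed

lemma power2_le_abs_of_le_1:
  fixes t :: real
  assumes "\<bar>t\<bar> \<le> 1"
  shows "t\<^sup>2 \<le> \<bar>t\<bar>"
proof -
  have "\<bar>t\<bar> * \<bar>t\<bar> \<le> 1 * \<bar>t\<bar>"
    using assms by (intro mult_right_mono) auto
  then show ?thesis
    by (simp add: power2_eq_square abs_mult_self_eq)
qed

section \<open>Solutions of the equation\<close>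

lemma ode_solD:
  assumes "ode_sol H \<rho> f"
  shows "\<And>y. (f has_real_derivative deriv f y) (at y)" "continuous_on UNIV (deriv f)"
    "f 0 = 0" "0 < deriv f 0"
    "\<And>y. y \<noteq> 0 \<Longrightarrow> f y \<noteq> 0 \<and>
       (deriv f y)\<^sup>2 * qpoly H \<rho> y = 1 - (1 - 2 * H) * (1 - y * deriv f y / f y)"
  using assms unfolding ode_sol_def C1_real_def qpoly_def
  by (auto simp: DERIV_deriv_iff_real_differentiable)

lemma ode_sol_deriv_pos:
  assumes "0 < H" "ode_sol H \<rho> f"
  shows "0 < deriv f y"
proof (rule ccontr)
  note f = ode_solD[OF assms(2)]
  assume "\<not> 0 < deriv f y"
  then obtain x where "deriv f x = 0"
    using IVT2'[of "deriv f" y 0 0] IVT'[of "deriv f" y 0 0] f(2,4)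
    by (cases "0 \<le> y") (auto intro: continuous_on_subset)
  moreover have "x \<noteq> 0"
    using f(4) calculation by auto
  ultimately show False
    using f(5)[of x] assms(1) by simp
qed

lemma ode_sol_reflect:
  assumes "ode_sol H \<rho> f"
  shows "ode_sol H (- \<rho>) (\<lambda>t. - f (- t))"
proof -
  note f = ode_solD[OF assms]
  have d: "((\<lambda>t. - f (- t)) has_real_derivative deriv f (- t)) (at t)" for t
    using DERIV_minus[OF DERIV_chain2[OF f(1) DERIV_minus[OF DERIV_ident]]] by simp
  then have deriv_eq: "deriv (\<lambda>t. - f (- t)) = (\<lambda>t. deriv f (- t))"
    by (simp add: fun_eq_iff DERIV_imp_deriv)
  have "continuous_on UNIV (\<lambda>t. deriv f (- t))"
    by (rule continuous_on_compose2[OF f(2)]) (auto intro: continuous_intros)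
  moreover have "\<forall>y. (\<lambda>t. - f (- t)) differentiable (at y)"
    using d by (auto simp: real_differentiable_def)
  moreover have "(deriv f (- t))\<^sup>2 * qpoly H (- \<rho>) t = 1 - (1 - 2 * H) * (1 - t * deriv f (- t) / - f (- t))"
    if "t \<noteq> 0" for t
    using f(5)[of "- t"] that qpoly_minus[of H \<rho> "- t"] by simp
  ultimately show ?thesis
    unfolding ode_sol_def C1_real_def deriv_eq using f(3,4,5) by (simp add: qpoly_def)
qed

section \<open>The fixed-point problem on a half-line\<close>

definition taylor1 :: "real \<Rightarrow> real \<Rightarrow> real" where
  "taylor1 H \<rho> = - 2 * \<rho> / ((2 * H + 1) * (3 + 2 * H))"

(* u y stands for g y / y on y \<ge> 0: the integral equation says that y u y has derivative
   slope H (qpoly H \<rho> y) (u y). *)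
definition half_line_sol :: "real \<Rightarrow> real \<Rightarrow> (real \<Rightarrow> real) \<Rightarrow> bool" where
  "half_line_sol H \<rho> u \<longleftrightarrow> continuous_on {0..} u \<and> u 0 = 1 \<and> (\<forall>y\<ge>0. 0 < u y) \<and>
     (\<forall>y>0. u y = integral {0..y} (\<lambda>s. slope H (qpoly H \<rho> s) (u s)) / y)"

definition near0_expansion :: "real \<Rightarrow> real \<Rightarrow> (real \<Rightarrow> real) \<Rightarrow> real \<Rightarrow> real \<Rightarrow> bool" where
  "near0_expansion H \<rho> u \<delta> K \<longleftrightarrow> (\<forall>y. 0 \<le> y \<and> y \<le> \<delta> \<longrightarrow>
     \<bar>u y - (1 + taylor1 H \<rho> * y)\<bar> \<le> K * y\<^sup>2 \<and>
     \<bar>slope H (qpoly H \<rho> y) (u y) - (1 + 2 * taylor1 H \<rho> * y)\<bar> \<le> K * y\<^sup>2)"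

lemma taylor1_minus: "taylor1 H (- \<rho>) = - taylor1 H \<rho>"
  unfolding taylor1_def by simp

lemma near0_expansion_mono:
  assumes "near0_expansion H \<rho> u \<delta> K" "\<delta>' \<le> \<delta>" "K \<le> K'"
  shows "near0_expansion H \<rho> u \<delta>' K'"
proof -
  have "K * y\<^sup>2 \<le> K' * y\<^sup>2" for y :: real
    using assms(3) by (intro mult_right_mono) auto
  then show ?thesis
    using assms unfolding near0_expansion_def by (blast intro: order_trans)
qed

lemma prod3_near_1:
  fixes x y z e :: real
  assumes "\<bar>x - 1\<bar> \<le> e" "\<bar>y - 1\<bar> \<le> e" "\<bar>z - 1\<bar> \<le> e" "e \<le> 1/5"
  shows "\<bar>x * y * z - 1\<bar> \<le> 4 * e"
proof -
  have yz: "\<bar>y\<bar> \<le> 6/5" "\<bar>z\<bar> \<le> 6/5"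
    using assms by auto
  have "\<bar>y * z\<bar> \<le> 36/25"
    using yz by (simp add: abs_mult mult_mono'[of "\<bar>y\<bar>" "6/5" "\<bar>z\<bar>" "6/5", simplified])
  then have t1: "\<bar>(x - 1) * (y * z)\<bar> \<le> e * (36/25)"
    unfolding abs_mult using assms(1) by (intro mult_mono) auto
  have t2: "\<bar>(y - 1) * z\<bar> \<le> e * (6/5)"
    unfolding abs_mult using assms(2) yz by (intro mult_mono) auto
  have "x * y * z - 1 = (x - 1) * (y * z) + (y - 1) * z + (z - 1)"
    by (simp add: algebra_simps)
  then have "\<bar>x * y * z - 1\<bar> \<le> \<bar>(x - 1) * (y * z)\<bar> + \<bar>(y - 1) * z\<bar> + \<bar>z - 1\<bar>"
    by linarith
  also have "\<dots> \<le> e * (36/25) + e * (6/5) + e"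
    using t1 t2 assms(3) by linarith
  also have "\<dots> \<le> 4 * e"
    using assms(1) by simp
  finally show ?thesis .
qed

lemma continuous_on_apply_bcontfun:
  "continuous_on UNIV (\<lambda>v::('a::topological_space \<Rightarrow>\<^sub>C real). apply_bcontfun v y)"
proof -
  have "1-lipschitz_on UNIV (\<lambda>v::('a \<Rightarrow>\<^sub>C real). apply_bcontfun v y)"
    unfolding lipschitz_on_def using dist_bounded by auto
  then show ?thesis
    by (rule lipschitz_on_continuous_on)
qed

locale half_line =
  fixes H \<rho> :: real
  assumes H_pos: "0 < H" and H_le: "H \<le> 1/2" and rho: "\<bar>\<rho>\<bar> < 1"
begin

abbreviation "Q \<equiv> qpoly H \<rho>"
abbreviation "c \<equiv> taylor1 H \<rho>"

definition "b = 1 - 2 * H"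
definition "q0 = 1 - \<bar>\<rho>\<bar>"
definition "\<alpha> = 2 * \<rho> / (2 * H + 1)"
definition "\<beta> = 1 / (2 * H + 1)\<^sup>2"

definition "k0 = \<beta> + 5 * c * \<alpha> + 8 * c\<^sup>2"
definition "k1 = 5 * c * \<beta> + 8 * c\<^sup>2 * \<alpha> + 4 * c ^ 3"
definition "k2 = 8 * c\<^sup>2 * \<beta> + 4 * c ^ 3 * \<alpha>"
definition "k3 = 4 * c ^ 3 * \<beta>"
definition "CP = \<bar>k0\<bar> + \<bar>k1\<bar> + \<bar>k2\<bar> + \<bar>k3\<bar>"

(* Near 0, every u with |u - 1 - c s| \<le> K s\<^sup>2 on [0, \<delta>] stays \<eta>-close to 1; there the slope map
   contracts with factor \<kappa>1 and preserves this bound. *)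
definition "\<kappa>1 = (1 + b) / 2"
definition "\<eta> = (1 - b) / 16"
definition "K = 2 * CP / (1 - \<kappa>1)"
definition "\<delta> = min 1 (\<eta> / (3 * \<bar>c\<bar> + K + \<bar>\<alpha>\<bar> + \<beta> + 1))"

lemma b_bounds: "0 \<le> b" "b < 1"
  using H_pos H_le by (auto simp: b_def)

lemma q0_pos: "0 < q0"
  using rho by (simp add: q0_def)

lemma Q_pos: "0 < Q s" "q0 \<le> Q s"
  using qpoly_pos[OF H_pos rho] by (auto simp: q0_def)

lemma \<kappa>1_bounds: "0 < \<kappa>1" "b < \<kappa>1" "\<kappa>1 < 1"
  using b_bounds by (auto simp: \<kappa>1_def)

lemma K_nonneg: "0 \<le> K"
proof -
  have "0 \<le> CP"
    by (simp add: CP_def)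
  then show ?thesis
    using \<kappa>1_bounds by (simp add: K_def)
qed

lemma \<delta>_bounds: "0 < \<delta>" "\<delta> \<le> 1"
proof -
  have "0 < 3 * \<bar>c\<bar> + K + \<bar>\<alpha>\<bar> + \<beta> + 1"
    using K_nonneg by (simp add: \<beta>_def add_nonneg_pos)
  moreover have "0 < \<eta>"
    using b_bounds by (simp add: \<eta>_def)
  ultimately show "0 < \<delta>" "\<delta> \<le> 1"
    by (auto simp: \<delta>_def)
qed

lemma \<delta>_small: "(3 * \<bar>c\<bar> + K + \<bar>\<alpha>\<bar> + \<beta> + 1) * \<delta> \<le> \<eta>"
proof -
  have "0 < 3 * \<bar>c\<bar> + K + \<bar>\<alpha>\<bar> + \<beta> + 1"
    using K_nonneg by (simp add: \<beta>_def add_nonneg_pos)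
  moreover have "\<delta> \<le> \<eta> / (3 * \<bar>c\<bar> + K + \<bar>\<alpha>\<bar> + \<beta> + 1)"
    by (simp add: \<delta>_def)
  ultimately show ?thesis
    by (simp add: field_simps mult.commute)
qed

lemma Q_eq: "Q s = 1 + \<alpha> * s + \<beta> * s\<^sup>2"
  unfolding qpoly_def \<alpha>_def \<beta>_def by (simp add: field_simps)

(* The value of c kills the linear term, so that 1 + c s and 1 + 2 c s solve the slope
   relation up to O(s\<^sup>2). *)
lemma slope_poly_taylor:
  "slope_poly H (Q s) (1 + c * s) (1 + 2 * c * s) = s\<^sup>2 * (k0 + k1 * s + k2 * s\<^sup>2 + k3 * s ^ 3)"
proof -
  have "c * (3 + 2 * H) = - 2 * \<rho> / (2 * H + 1)"
    using H_pos by (simp add: taylor1_def)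
  then have "\<alpha> + c * (3 + 2 * H) = 0"
    by (simp add: \<alpha>_def)
  moreover have "slope_poly H (Q s) (1 + c * s) (1 + 2 * c * s)
      = s\<^sup>2 * (k0 + k1 * s + k2 * s\<^sup>2 + k3 * s ^ 3) + s * (\<alpha> + c * (3 + 2 * H))"
    unfolding slope_poly_def Q_eq k0_def k1_def k2_def k3_def
    by (simp add: algebra_simps power2_eq_square power3_eq_cube)
  ultimately show ?thesis
    by simp
qed

lemma slope_poly_taylor_le:
  assumes "0 \<le> s" "s \<le> 1"
  shows "\<bar>slope_poly H (Q s) (1 + c * s) (1 + 2 * c * s)\<bar> \<le> CP * s\<^sup>2"
proof -
  have s: "s\<^sup>2 \<le> 1" "s ^ 3 \<le> 1"
    using assms by (auto simp: power_le_one)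
  have abs4: "\<bar>x1 + x2 + x3 + x4\<bar> \<le> \<bar>x1\<bar> + \<bar>x2\<bar> + \<bar>x3\<bar> + \<bar>x4\<bar>" for x1 x2 x3 x4 :: real
    by (auto split: abs_split)
  have "\<bar>k0 + k1 * s + k2 * s\<^sup>2 + k3 * s ^ 3\<bar> \<le> \<bar>k0\<bar> + \<bar>k1 * s\<bar> + \<bar>k2 * s\<^sup>2\<bar> + \<bar>k3 * s ^ 3\<bar>"
    by (rule abs4)
  also have "\<dots> = \<bar>k0\<bar> + \<bar>k1\<bar> * s + \<bar>k2\<bar> * s\<^sup>2 + \<bar>k3\<bar> * s ^ 3"
    using assms by (simp add: abs_mult)
  also have "\<dots> \<le> CP"
    unfolding CP_def using assms s by (intro add_mono mult_left_le) auto
  finally have "s\<^sup>2 * \<bar>k0 + k1 * s + k2 * s\<^sup>2 + k3 * s ^ 3\<bar> \<le> s\<^sup>2 * CP"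
    by (intro mult_left_mono) auto
  then show ?thesis
    unfolding slope_poly_taylor by (simp add: abs_mult mult.commute)
qed

lemma near0:
  assumes "0 \<le> s" "s \<le> \<delta>"
  shows "\<bar>Q s - 1\<bar> \<le> \<eta>" "\<bar>(1 + 2 * c * s) - 1\<bar> \<le> \<eta>"
    "\<bar>u - 1 - c * s\<bar> \<le> K * s\<^sup>2 \<Longrightarrow> \<bar>u - 1\<bar> \<le> \<eta>"
proof -
  have ss: "s\<^sup>2 \<le> s"
    using assms \<delta>_bounds by (simp add: power2_eq_square mult_left_le_one_le)
  have "(3 * \<bar>c\<bar> + K + \<bar>\<alpha>\<bar> + \<beta> + 1) * s \<le> (3 * \<bar>c\<bar> + K + \<bar>\<alpha>\<bar> + \<beta> + 1) * \<delta>"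
    using assms K_nonneg by (intro mult_left_mono) (auto simp: \<beta>_def)
  moreover have "(3 * \<bar>c\<bar> + K + \<bar>\<alpha>\<bar> + \<beta> + 1) * s
      = \<bar>c\<bar> * s + \<bar>c\<bar> * s + \<bar>c\<bar> * s + K * s + \<bar>\<alpha>\<bar> * s + \<beta> * s + s"
    by (simp add: algebra_simps)
  moreover have "0 \<le> \<bar>c\<bar> * s" "0 \<le> K * s" "0 \<le> \<bar>\<alpha>\<bar> * s" "0 \<le> \<beta> * s"
    using assms K_nonneg by (auto simp: \<beta>_def)
  ultimately have small: "\<bar>\<alpha>\<bar> * s + \<beta> * s \<le> \<eta>" "2 * \<bar>c\<bar> * s \<le> \<eta>" "\<bar>c\<bar> * s + K * s \<le> \<eta>"
    using \<delta>_small assms by linarith+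
  have "\<bar>Q s - 1\<bar> \<le> \<bar>\<alpha> * s\<bar> + \<bar>\<beta> * s\<^sup>2\<bar>"
    unfolding Q_eq using abs_triangle_ineq[of "\<alpha> * s" "\<beta> * s\<^sup>2"] by simp
  also have "\<dots> \<le> \<bar>\<alpha>\<bar> * s + \<beta> * s"
    using assms ss mult_left_mono[OF ss, of \<beta>] by (simp add: abs_mult \<beta>_def)
  finally show "\<bar>Q s - 1\<bar> \<le> \<eta>"
    using small by linarith
  have "\<bar>(1 + 2 * c * s) - 1\<bar> = 2 * \<bar>c\<bar> * s"
    using assms by (simp add: abs_mult)
  then show "\<bar>(1 + 2 * c * s) - 1\<bar> \<le> \<eta>"
    using small by linarith
  assume "\<bar>u - 1 - c * s\<bar> \<le> K * s\<^sup>2"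
  moreover have "K * s\<^sup>2 \<le> K * s"
    using ss K_nonneg by (simp add: mult_left_mono)
  moreover have "\<bar>c * s\<bar> = \<bar>c\<bar> * s"
    using assms by (simp add: abs_mult)
  ultimately show "\<bar>u - 1\<bar> \<le> \<eta>"
    using small by linarith
qed

lemma \<eta>_bounds: "0 < \<eta>" "\<eta> \<le> 1/16"
  using b_bounds by (auto simp: \<eta>_def)

lemma \<kappa>1_margin: "b + 4 * \<eta> \<le> \<kappa>1 * (1 - 4 * \<eta>)"
proof -
  have "\<kappa>1 - b = 8 * \<eta>"
    by (simp add: \<kappa>1_def \<eta>_def)
  moreover have "4 * \<eta> * \<kappa>1 \<le> 4 * \<eta>"
    using \<kappa>1_bounds \<eta>_bounds by (intro mult_left_le) auto
  moreover have "\<kappa>1 * (1 - 4 * \<eta>) = \<kappa>1 - 4 * \<eta> * \<kappa>1"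
    by (simp add: algebra_simps)
  ultimately show ?thesis
    by linarith
qed

lemma near0_contraction:
  assumes "0 \<le> s" "s \<le> \<delta>" "\<bar>u1 - 1 - c * s\<bar> \<le> K * s\<^sup>2" "\<bar>u2 - 1 - c * s\<bar> \<le> K * s\<^sup>2"
  shows "b / (Q s * u1 * u2) \<le> \<kappa>1"
proof -
  have "\<bar>Q s * u1 * u2 - 1\<bar> \<le> 4 * \<eta>"
    using near0[OF assms(1,2)] assms(3,4) \<eta>_bounds by (intro prod3_near_1) auto
  then have P: "1 - 4 * \<eta> \<le> Q s * u1 * u2" "0 < Q s * u1 * u2"
    using \<eta>_bounds by auto
  have "b \<le> \<kappa>1 * (1 - 4 * \<eta>)"
    using \<kappa>1_margin \<eta>_bounds by linarith
  also have "\<dots> \<le> \<kappa>1 * (Q s * u1 * u2)"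
    using P \<kappa>1_bounds by (intro mult_left_mono) auto
  finally show ?thesis
    using P by (simp add: divide_le_eq)
qed

lemma near0_box:
  assumes "0 \<le> s" "s \<le> \<delta>" "\<bar>u - 1 - c * s\<bar> \<le> K * s\<^sup>2"
  shows "0 < u" "0 < 1 + 2 * c * s" "1/2 \<le> Q s * u * (1 + 2 * c * s)"
    "\<bar>Q s * (1 + 2 * c * s)\<^sup>2 - 2 * H\<bar> \<le> \<kappa>1 * (Q s * u * (1 + 2 * c * s))"
proof -
  define hs where "hs = 1 + 2 * c * s"
  have e: "\<bar>Q s - 1\<bar> \<le> \<eta>" "\<bar>hs - 1\<bar> \<le> \<eta>" "\<bar>u - 1\<bar> \<le> \<eta>"
    using near0 assms by (auto simp: hs_def)
  note \<eta> = \<eta>_bounds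
  show "0 < u" "0 < 1 + 2 * c * s"
    using e \<eta> by (auto simp: hs_def)
  have D: "\<bar>Q s * u * hs - 1\<bar> \<le> 4 * \<eta>"
    using e \<eta> by (intro prod3_near_1) auto
  then show "1/2 \<le> Q s * u * (1 + 2 * c * s)"
    using \<eta> by (simp add: hs_def)
  have "\<bar>Q s * hs * hs - 1\<bar> \<le> 4 * \<eta>"
    using e \<eta> by (intro prod3_near_1) auto
  moreover have "Q s * hs\<^sup>2 - 2 * H = (Q s * hs * hs - 1) + b"
    by (simp add: power2_eq_square b_def)
  ultimately have "\<bar>Q s * hs\<^sup>2 - 2 * H\<bar> \<le> 4 * \<eta> + b"
    using b_bounds abs_triangle_ineq[of "Q s * hs * hs - 1" b] by simp
  also have "\<dots> \<le> \<kappa>1 * (1 - 4 * \<eta>)"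
    using \<kappa>1_margin by linarith
  also have "\<dots> \<le> \<kappa>1 * (Q s * u * hs)"
    using D \<kappa>1_bounds by (intro mult_left_mono) auto
  finally show "\<bar>Q s * (1 + 2 * c * s)\<^sup>2 - 2 * H\<bar> \<le> \<kappa>1 * (Q s * u * (1 + 2 * c * s))"
    by (simp add: hs_def)
qed

(* Perturbation of the approximate root 1 + 2 c s: its residual is O(s\<^sup>2) by slope_poly_taylor, and
   the error in u enters with a factor that \<kappa>1 < 1 keeps below K. *)
lemma near0_slope:
  assumes "0 \<le> s" "s \<le> \<delta>" "\<bar>u - 1 - c * s\<bar> \<le> K * s\<^sup>2"
  shows "\<bar>slope H (Q s) u - (1 + 2 * c * s)\<bar> \<le> K * s\<^sup>2"
proof -
  define hs D where "hs = 1 + 2 * c * s" and "D = Q s * u * hs"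
  note box = near0_box[OF assms, folded hs_def D_def]
  have "\<bar>u - (1 + c * s)\<bar> \<le> K * s\<^sup>2"
    using assms(3) by (simp add: algebra_simps)
  then have lin: "\<bar>(u - (1 + c * s)) * (Q s * hs\<^sup>2 - 2 * H)\<bar> \<le> K * s\<^sup>2 * (\<kappa>1 * D)"
    using K_nonneg box(4) unfolding abs_mult by (intro mult_mono) auto
  have decomp: "slope_poly H (Q s) u hs
      = slope_poly H (Q s) (1 + c * s) hs + (u - (1 + c * s)) * (Q s * hs\<^sup>2 - 2 * H)"
    unfolding slope_poly_def by (simp add: algebra_simps)
  have "\<bar>slope H (Q s) u - hs\<bar> \<le> \<bar>slope_poly H (Q s) u hs\<bar> / D"
    unfolding D_def using H_pos Q_pos box(1,2) by (intro slope_poly_root_dist slope_pos slope_poly_slope)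
  also have "\<dots> \<le> (CP * s\<^sup>2 + K * s\<^sup>2 * (\<kappa>1 * D)) / D"
  proof (rule divide_right_mono)
    have "\<bar>slope_poly H (Q s) (1 + c * s) hs\<bar> \<le> CP * s\<^sup>2"
      unfolding hs_def using assms \<delta>_bounds by (intro slope_poly_taylor_le) auto
    then show "\<bar>slope_poly H (Q s) u hs\<bar> \<le> CP * s\<^sup>2 + K * s\<^sup>2 * (\<kappa>1 * D)"
      unfolding decomp using lin abs_triangle_ineq[of "slope_poly H (Q s) (1 + c * s) hs"] by linarith
  qed (use box(3) in simp)
  also have "\<dots> = CP * s\<^sup>2 / D + \<kappa>1 * K * s\<^sup>2"
    using box(3) by (simp add: field_simps)
  also have "\<dots> \<le> CP * s\<^sup>2 / (1/2) + \<kappa>1 * K * s\<^sup>2"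
    using box(3) by (intro add_right_mono divide_left_mono) (auto simp: CP_def)
  also have "\<dots> = (2 * CP + \<kappa>1 * K) * s\<^sup>2"
    by (simp add: algebra_simps)
  also have "2 * CP + \<kappa>1 * K = K"
    using \<kappa>1_bounds unfolding K_def by (simp add: field_simps)
  finally show ?thesis
    by (simp add: hs_def)
qed

definition m :: "real \<Rightarrow> real" where
  "m y = sqrt (H * q0 / Q y)"

definition "Hmax = 2 + b / (q0 * sqrt H) + sqrt (2 * H / q0)"

definition "L = b / (H * q0)"

definition "la = (SOME r. 0 < r \<and> \<kappa>1 + L / (r * \<delta>) < 1)"

definition "\<kappa> = \<kappa>1 + L / (la * \<delta>)"

(* Functions are stored divided by the weight \<omega>, so that the sup distance of stored functions is
   the weighted distance sup |u1 - u2| exp (- la y) in which the averaging map contracts. *)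
definition \<omega> :: "real \<Rightarrow> real" where
  "\<omega> y = exp (la * max 0 y)"

lemma L_nonneg: "0 \<le> L"
  using b_bounds H_pos q0_pos by (simp add: L_def)

lemma la_\<kappa>: "0 < la" "0 \<le> \<kappa>" "\<kappa> < 1"
proof -
  have "\<exists>r>0. \<kappa>1 + L / (r * \<delta>) < 1"
    using \<kappa>1_bounds L_nonneg \<delta>_bounds by (intro exists_contraction_rate) auto
  then have "0 < la \<and> \<kappa>1 + L / (la * \<delta>) < 1"
    unfolding la_def by (rule someI_ex)
  then show "0 < la" "\<kappa> < 1"
    by (auto simp: \<kappa>_def)
  then show "0 \<le> \<kappa>"
    using \<kappa>1_bounds L_nonneg \<delta>_bounds by (simp add: \<kappa>_def)
qed

lemma \<omega>_props: "0 < \<omega> y" "1 \<le> \<omega> y" "y \<le> 0 \<Longrightarrow> \<omega> y = 1" "0 \<le> y \<Longrightarrow> \<omega> y = exp (la * y)"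
  "continuous_on UNIV \<omega>"
  using la_\<kappa>(1) by (auto simp: \<omega>_def intro!: continuous_intros)

lemma m_props: "0 < m y" "m y \<le> 3/4" "Q y * (m y)\<^sup>2 = H * q0"
proof -
  have p: "0 < H * q0 / Q y"
    using H_pos q0_pos Q_pos by simp
  then show "0 < m y"
    by (simp add: m_def)
  show "Q y * (m y)\<^sup>2 = H * q0"
    using p Q_pos(1)[of y] by (simp add: m_def)
  have "H * q0 / Q y \<le> H * q0 / q0"
    using H_pos q0_pos Q_pos by (intro divide_left_mono) auto
  also have "\<dots> \<le> (3/4)\<^sup>2"
    using q0_pos H_le by (simp add: power2_eq_square)
  finally show "m y \<le> 3/4"
    unfolding m_def using real_sqrt_le_mono by fastforce
qed

lemma Hmax_ge: "2 \<le> Hmax"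
  using b_bounds q0_pos H_pos unfolding Hmax_def by simp

lemma m_le_slope:
  assumes "0 \<le> s" "s \<le> y" "0 < u"
  shows "m y \<le> slope H (Q s) u"
proof -
  have "Q s \<le> 2 * Q y / q0"
    using qpoly_le[OF H_pos rho assms(1,2)] by (simp add: q0_def)
  then have "H * (Q s * q0) \<le> H * (2 * Q y)"
    using q0_pos H_pos by (simp add: field_simps)
  then have "H * q0 / Q y \<le> 2 * H / Q s"
    using Q_pos[of s] Q_pos[of y] by (simp add: field_simps)
  then have "m y \<le> sqrt (2 * H / Q s)"
    unfolding m_def by simp
  also have "\<dots> \<le> slope H (Q s) u"
    using H_pos H_le Q_pos assms(3) by (intro sqrt_le_slope) auto
  finally show ?thesis .
qed

lemma slope_le_Hmax:
  assumes "0 \<le> s" "m s \<le> u"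
  shows "slope H (Q s) u \<le> Hmax"
proof -
  have u: "0 < u"
    using m_props(1)[of s] assms by linarith
  have "q0 * sqrt H \<le> Q s * m s"
  proof -
    have "(Q s * m s)\<^sup>2 = Q s * (H * q0)"
      using m_props(3)[of s] by (simp add: power2_eq_square algebra_simps)
    then have "Q s * m s = sqrt (Q s * (H * q0))"
      using Q_pos m_props by (simp add: real_sqrt_unique less_imp_le)
    also have "\<dots> \<ge> sqrt (q0 * (H * q0))"
      using Q_pos H_pos q0_pos by (simp add: mult_right_mono)
    also have "sqrt (q0 * (H * q0)) = q0 * sqrt H"
      using q0_pos H_pos
      by (simp add: real_sqrt_mult power2_eq_square[symmetric] mult.commute mult.left_commute)
    finally show ?thesis .
  qed
  also have "\<dots> \<le> Q s * u"
    using assms Q_pos by simp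
  finally have le: "q0 * sqrt H \<le> Q s * u" .
  moreover have "0 < q0 * sqrt H"
    using q0_pos H_pos by simp
  ultimately have "b / (Q s * u) \<le> b / (q0 * sqrt H)"
    using b_bounds by (intro divide_left_mono) auto
  moreover have "sqrt (2 * H / Q s) \<le> sqrt (2 * H / q0)"
    using Q_pos H_pos q0_pos by (simp add: frac_le)
  moreover have "slope H (Q s) u \<le> b / (Q s * u) + sqrt (2 * H / Q s)"
    using slope_le[OF H_pos H_le Q_pos(1) u] by (simp add: b_def)
  ultimately show ?thesis
    unfolding Hmax_def by linarith
qed

lemma ratio_le_L:
  assumes "m s \<le> u1" "m s \<le> u2"
  shows "b / (Q s * u1 * u2) \<le> L"
proof -
  have "H * q0 = Q s * m s * m s"
    using m_props(3)[of s] by (simp add: power2_eq_square mult.assoc)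
  also have "\<dots> \<le> Q s * u1 * u2"
    using assms Q_pos(1)[of s] m_props(1)[of s] by (intro mult_mono) auto
  finally have "H * q0 \<le> Q s * u1 * u2" .
  moreover have "0 < H * q0"
    using H_pos q0_pos by simp
  ultimately show ?thesis
    unfolding L_def using b_bounds by (intro divide_left_mono) auto
qed

definition adm :: "(real \<Rightarrow>\<^sub>C real) set" where
  "adm = {v. (\<forall>y. y \<le> 0 \<longrightarrow> apply_bcontfun v y = 1) \<and>
     (\<forall>y. 0 \<le> y \<longrightarrow> m y \<le> \<omega> y * apply_bcontfun v y \<and> \<omega> y * apply_bcontfun v y \<le> Hmax) \<and>
     (\<forall>y. 0 \<le> y \<and> y \<le> \<delta> \<longrightarrow> \<bar>\<omega> y * apply_bcontfun v y - 1 - c * y\<bar> \<le> K * y\<^sup>2)}"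

definition unweight :: "(real \<Rightarrow>\<^sub>C real) \<Rightarrow> real \<Rightarrow> real" where
  "unweight v y = \<omega> y * apply_bcontfun v y"

definition avg_slope :: "(real \<Rightarrow>\<^sub>C real) \<Rightarrow> real \<Rightarrow> real" where
  "avg_slope v y = (if y \<le> 0 then 1 else integral {0..y} (\<lambda>s. slope H (Q s) (unweight v s)) / y)"

definition T :: "(real \<Rightarrow>\<^sub>C real) \<Rightarrow> (real \<Rightarrow>\<^sub>C real)" where
  "T v = Bcontfun (\<lambda>y. avg_slope v y / \<omega> y)"

lemma adm_props:
  assumes "v \<in> adm"
  shows "y \<le> 0 \<Longrightarrow> unweight v y = 1"
    "0 \<le> y \<Longrightarrow> m y \<le> unweight v y"
    "0 \<le> y \<Longrightarrow> unweight v y \<le> Hmax"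
    "0 \<le> y \<Longrightarrow> y \<le> \<delta> \<Longrightarrow> \<bar>unweight v y - 1 - c * y\<bar> \<le> K * y\<^sup>2"
    "0 < unweight v y"
    "continuous_on UNIV (unweight v)"
proof -
  show "y \<le> 0 \<Longrightarrow> unweight v y = 1"
    using assms \<omega>_props(3) by (simp add: adm_def unweight_def)
  show "0 \<le> y \<Longrightarrow> m y \<le> unweight v y" "0 \<le> y \<Longrightarrow> unweight v y \<le> Hmax"
    "0 \<le> y \<Longrightarrow> y \<le> \<delta> \<Longrightarrow> \<bar>unweight v y - 1 - c * y\<bar> \<le> K * y\<^sup>2"
    using assms by (simp_all add: adm_def unweight_def)
  show "0 < unweight v y"
  proof (cases "0 \<le> y")
    case True
    then show ?thesis
      using assms m_props(1)[of y] by (simp add: adm_def unweight_def) (meson less_le_trans)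
  next
    case False
    then show ?thesis
      using assms \<omega>_props(3) by (simp add: adm_def unweight_def)
  qed
  show "continuous_on UNIV (unweight v)"
    unfolding unweight_def using \<omega>_props(5) by (intro continuous_intros) auto
qed

lemma continuous_on_slope_unweight:
  assumes "v \<in> adm"
  shows "continuous_on S (\<lambda>s. slope H (Q s) (unweight v s))"
  using adm_props[OF assms] continuous_on_subset[OF adm_props(6)[OF assms]] H_pos Q_pos
  by (intro continuous_on_slope continuous_on_qpoly) auto

lemma avg_slope_bounds:
  assumes "v \<in> adm" "0 \<le> y"
  shows "m y \<le> avg_slope v y \<and> avg_slope v y \<le> Hmax"
proof (cases "y = 0")
  case True
  then show ?thesis
    using m_props(2)[of y] Hmax_ge by (simp add: avg_slope_def)
next
  case False
  then have y: "0 < y"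
    using assms by simp
  define h where "h = (\<lambda>s. slope H (Q s) (unweight v s))"
  note u = adm_props[OF assms(1)]
  have I: "h integrable_on {0..y}"
    unfolding h_def using assms(1) by (intro integrable_continuous_interval continuous_on_slope_unweight)
  have "integral {0..y} (\<lambda>s. m y) \<le> integral {0..y} h"
    using I u(5) by (intro integral_le) (auto simp: h_def intro!: m_le_slope)
  moreover have "integral {0..y} h \<le> integral {0..y} (\<lambda>s. Hmax)"
    using I u(2) by (intro integral_le) (auto simp: h_def intro!: slope_le_Hmax)
  moreover have "integral {0..y} h = y * avg_slope v y"
    using y by (simp add: avg_slope_def h_def)
  ultimately have "y * m y \<le> y * avg_slope v y" "y * avg_slope v y \<le> y * Hmax"
    using y by auto
  then show ?thesis
    using y by (simp add: mult_le_cancel_left_pos)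
qed

lemma avg_slope_expansion:
  assumes "v \<in> adm" "0 \<le> y" "y \<le> \<delta>"
  shows "\<bar>avg_slope v y - 1 - c * y\<bar> \<le> K * y\<^sup>2"
proof (cases "y = 0")
  case True
  then show ?thesis
    by (simp add: avg_slope_def)
next
  case False
  then have y: "0 < y"
    using assms by simp
  define h where "h = (\<lambda>s. slope H (Q s) (unweight v s))"
  note u = adm_props[OF assms(1)]
  have I: "h integrable_on {0..y}"
    unfolding h_def using assms(1) by (intro integrable_continuous_interval continuous_on_slope_unweight)
  have diff: "((\<lambda>s. h s - (1 + 2 * c * s)) has_integral (integral {0..y} h - (y + c * y\<^sup>2))) {0..y}"
    using I assms(2) by (intro has_integral_diff has_integral_affine_Icc0) auto
  have "\<bar>integral {0..y} h - (y + c * y\<^sup>2)\<bar> = norm (integral {0..y} (\<lambda>s. h s - (1 + 2 * c * s)))"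
    using diff by (simp add: integral_unique)
  also have "\<dots> \<le> integral {0..y} (\<lambda>s. K * y\<^sup>2)"
  proof (rule integral_norm_bound_integral)
    show "(\<lambda>s. h s - (1 + 2 * c * s)) integrable_on {0..y}"
      using diff by blast
    fix s
    assume s: "s \<in> {0..y}"
    then have "\<bar>h s - (1 + 2 * c * s)\<bar> \<le> K * s\<^sup>2"
      unfolding h_def using u(4) assms(3) by (intro near0_slope) auto
    also have "\<dots> \<le> K * y\<^sup>2"
      using s K_nonneg by (intro mult_left_mono power_mono) auto
    finally show "norm (h s - (1 + 2 * c * s)) \<le> K * y\<^sup>2"
      by simp
  qed (rule integrable_continuous_interval, intro continuous_intros)
  also have "\<dots> = y * (K * y\<^sup>2)"
    using y by simp
  finally have A: "\<bar>integral {0..y} h - (y + c * y\<^sup>2)\<bar> \<le> y * (K * y\<^sup>2)" .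
  have "avg_slope v y - 1 - c * y = (integral {0..y} h - (y + c * y\<^sup>2)) / y"
    using y by (simp add: avg_slope_def h_def field_simps power2_eq_square)
  then have "\<bar>avg_slope v y - 1 - c * y\<bar> = \<bar>integral {0..y} h - (y + c * y\<^sup>2)\<bar> / y"
    using y by simp
  also have "\<dots> \<le> y * (K * y\<^sup>2) / y"
    using A y by (intro divide_right_mono) auto
  also have "\<dots> = K * y\<^sup>2"
    using y by simp
  finally show ?thesis .
qed

lemma lip_at0_avg_slope:
  assumes "v \<in> adm"
  shows "lip_at0 (avg_slope v) 1"
proof (rule lip_at0I[OF \<delta>_bounds(1)])
  fix t :: real
  assume t: "t \<noteq> 0" "\<bar>t\<bar> < \<delta>"
  show "\<bar>avg_slope v t - 1\<bar> \<le> (\<bar>c\<bar> + K) * \<bar>t\<bar>"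
  proof (cases "t < 0")
    case True
    have "0 \<le> (\<bar>c\<bar> + K) * \<bar>t\<bar>"
      using K_nonneg by simp
    then show ?thesis
      using True by (simp add: avg_slope_def)
  next
    case False
    then have "\<bar>avg_slope v t - 1 - c * t\<bar> \<le> K * t\<^sup>2"
      using avg_slope_expansion[OF assms, of t] t by simp
    moreover have "K * t\<^sup>2 \<le> K * t"
      using False t \<delta>_bounds K_nonneg
      by (intro mult_left_mono) (auto simp: power2_eq_square mult_left_le_one_le)
    moreover have "\<bar>c * t\<bar> = \<bar>c\<bar> * \<bar>t\<bar>"
      by (simp add: abs_mult)
    ultimately show ?thesis
      using False by (simp add: algebra_simps)
  qed
qed

lemma continuous_avg_slope:
  assumes "v \<in> adm"
  shows "continuous_on UNIV (avg_slope v)"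
proof (intro continuous_at_imp_continuous_on ballI)
  fix y :: real
  consider "y < 0" | "y = 0" | "0 < y"
    by linarith
  then show "isCont (avg_slope v) y"
  proof cases
    case 1
    have "eventually (\<lambda>t. avg_slope v t = 1) (nhds y)"
      using eventually_nhds_in_open[of "{..<0}" y] 1 by (auto elim!: eventually_mono simp: avg_slope_def)
    then show ?thesis
      by (subst isCont_cong) auto
  next
    case 2
    then show ?thesis
      using lip_at0_tendsto[OF lip_at0_avg_slope[OF assms]] by (simp add: isCont_def avg_slope_def)
  next
    case 3
    have "isCont (\<lambda>t. integral {0..t} (\<lambda>s. slope H (Q s) (unweight v s)) / t) y"
      using 3 continuous_on_slope_unweight[OF assms]
      by (intro continuous_intros DERIV_isCont[OF has_real_derivative_integral_Icc0]) auto
    moreover have "eventually (\<lambda>t. avg_slope v t = integral {0..t} (\<lambda>s. slope H (Q s) (unweight v s)) / t) (nhds y)"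
      using eventually_nhds_in_open[of "{0<..}" y] 3 by (auto elim!: eventually_mono simp: avg_slope_def)
    ultimately show ?thesis
      by (subst isCont_cong) auto
  qed
qed

lemma weighted_avg_slope_bcontfun:
  assumes "v \<in> adm"
  shows "(\<lambda>y. avg_slope v y / \<omega> y) \<in> bcontfun"
proof (rule bcontfun_normI)
  show "continuous_on UNIV (\<lambda>y. avg_slope v y / \<omega> y)"
    using continuous_avg_slope[OF assms] \<omega>_props(1,5)
    by (intro continuous_intros) (auto simp: less_imp_neq[symmetric])
  fix y
  have "\<bar>avg_slope v y\<bar> \<le> Hmax"
  proof (cases "y \<le> 0")
    case True
    then show ?thesis
      using Hmax_ge by (simp add: avg_slope_def)
  next
    case False
    then show ?thesis
      using avg_slope_bounds[OF assms, of y] m_props(1)[of y] by auto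
  qed
  then have "\<bar>avg_slope v y\<bar> / \<omega> y \<le> Hmax / 1"
    using \<omega>_props(2)[of y] Hmax_ge by (intro frac_le) auto
  then show "norm (avg_slope v y / \<omega> y) \<le> Hmax"
    using \<omega>_props(1)[of y] by (simp add: abs_divide)
qed

lemma unweight_T:
  assumes "v \<in> adm"
  shows "unweight (T v) y = avg_slope v y"
  unfolding unweight_def T_def Bcontfun_inverse[OF weighted_avg_slope_bcontfun[OF assms]]
  using \<omega>_props(1)[of y] by simp

lemma T_adm:
  assumes "v \<in> adm"
  shows "T v \<in> adm"
proof -
  have u: "\<omega> y * apply_bcontfun (T v) y = avg_slope v y" for y
    using unweight_T[OF assms] by (simp add: unweight_def)
  show ?thesis
    unfolding adm_def mem_Collect_eq u
  proof (intro conjI allI impI)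
    fix y :: real
    assume "y \<le> 0"
    then show "apply_bcontfun (T v) y = 1"
      using u[of y] \<omega>_props(3)[of y] by (simp add: avg_slope_def)
  qed (use avg_slope_bounds[OF assms] avg_slope_expansion[OF assms] in auto)
qed

lemma T_apply:
  assumes "v \<in> adm"
  shows "apply_bcontfun (T v) y = avg_slope v y / \<omega> y"
  unfolding T_def Bcontfun_inverse[OF weighted_avg_slope_bcontfun[OF assms]] ..

lemma unweight_dist_le:
  assumes "0 \<le> s"
  shows "\<bar>unweight v1 s - unweight v2 s\<bar> \<le> dist v1 v2 * exp (la * s)"
proof -
  have "\<bar>unweight v1 s - unweight v2 s\<bar> = \<omega> s * \<bar>apply_bcontfun v1 s - apply_bcontfun v2 s\<bar>"
    unfolding unweight_def using \<omega>_props(1)[of s] by (simp add: abs_mult flip: right_diff_distrib)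
  also have "\<dots> \<le> \<omega> s * dist v1 v2"
    using dist_bounded[of v1 s v2] \<omega>_props(1)[of s] by (intro mult_left_mono) (auto simp: dist_real_def)
  also have "\<dots> = dist v1 v2 * exp (la * s)"
    using \<omega>_props(4) assms by simp
  finally show ?thesis .
qed

lemma T_contraction:
  assumes v1: "v1 \<in> adm" and v2: "v2 \<in> adm"
  shows "dist (T v1) (T v2) \<le> \<kappa> * dist v1 v2"
proof (rule dist_bound)
  fix y :: real
  define D where "D = dist v1 v2"
  define I where "I v = integral {0..y} (\<lambda>s. slope H (Q s) (unweight v s))" for v
  note u1 = adm_props[OF v1] and u2 = adm_props[OF v2]
  show "dist (apply_bcontfun (T v1) y) (apply_bcontfun (T v2) y) \<le> \<kappa> * dist v1 v2"
  proof (cases "y \<le> 0")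
    case True
    then have "apply_bcontfun (T v1) y = apply_bcontfun (T v2) y"
      using T_apply[OF v1] T_apply[OF v2] by (simp add: avg_slope_def)
    then show ?thesis
      using la_\<kappa> by simp
  next
    case False
    then have y: "0 < y"
      by simp
    have dist_le: "\<bar>unweight v1 s - unweight v2 s\<bar> \<le> D * exp (la * s)" if "s \<in> {0..y}" for s
      using unweight_dist_le[of s v1 v2] that by (simp add: D_def)
    have far: "(1 - 2 * H) / (Q s * unweight v1 s * unweight v2 s) \<le> L" if "s \<in> {0..y}" for s
      using ratio_le_L[of s] u1(2) u2(2) that unfolding b_def by auto
    have near: "(1 - 2 * H) / (Q s * unweight v1 s * unweight v2 s) \<le> \<kappa>1"
      if "s \<in> {0..y}" "s \<le> \<delta>" for s
      using near0_contraction[of s] u1(4) u2(4) that unfolding b_def by auto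
    have "dist (apply_bcontfun (T v1) y) (apply_bcontfun (T v2) y) = \<bar>I v1 - I v2\<bar> / (y * exp (la * y))"
      using T_apply[OF v1] T_apply[OF v2] y \<omega>_props(4)[of y]
      by (simp add: avg_slope_def I_def dist_real_def abs_divide flip: diff_divide_distrib)
    also have "\<dots> \<le> \<kappa> * D * exp (la * y) * y / (y * exp (la * y))"
    proof (rule divide_right_mono)
      show "\<bar>I v1 - I v2\<bar> \<le> \<kappa> * D * exp (la * y) * y"
        unfolding \<kappa>_def I_def
      proof (rule integral_slope_diff_le[OF H_pos H_le \<delta>_bounds(1) la_\<kappa>(1) _ L_nonneg _ y
            continuous_on_qpoly continuous_on_subset[OF u1(6)] continuous_on_subset[OF u2(6)]
            Q_pos(1) u1(5) u2(5) dist_le far near])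
        show "0 \<le> \<kappa>1" "0 \<le> D"
          using \<kappa>1_bounds by (auto simp: D_def)
      qed auto
    qed (use y in simp)
    also have "\<dots> = \<kappa> * D"
      using y by simp
    finally show ?thesis
      by (simp add: D_def)
  qed
qed

lemma adm_closed: "closed adm"
proof -
  have "adm = (\<Inter>y\<in>{..0}. {v. apply_bcontfun v y = 1}) \<inter>
      (\<Inter>y\<in>{0..}. {v. m y \<le> \<omega> y * apply_bcontfun v y}) \<inter>
      (\<Inter>y\<in>{0..}. {v. \<omega> y * apply_bcontfun v y \<le> Hmax}) \<inter>
      (\<Inter>y\<in>{0..\<delta>}. {v. \<bar>\<omega> y * apply_bcontfun v y - 1 - c * y\<bar> \<le> K * y\<^sup>2})"
    unfolding adm_def by auto
  then show ?thesis
    by (simp only:) (intro closed_Int closed_INT ballI closed_Collect_eq closed_Collect_le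
        continuous_intros continuous_on_apply_bcontfun)
qed

lemma abs_c_\<delta>_le: "\<bar>c\<bar> * \<delta> \<le> 1/48"
proof -
  have "3 * (\<bar>c\<bar> * \<delta>) + (K + \<bar>\<alpha>\<bar> + \<beta> + 1) * \<delta> \<le> \<eta>"
    using \<delta>_small by (simp add: algebra_simps)
  moreover have "0 \<le> (K + \<bar>\<alpha>\<bar> + \<beta> + 1) * \<delta>"
    using K_nonneg \<delta>_bounds by (simp add: \<beta>_def)
  ultimately show ?thesis
    using \<eta>_bounds by linarith
qed

lemma adm_nonempty: "adm \<noteq> {}"
proof -
  define u0 where "u0 y = 1 + c * min \<delta> (max 0 y)" for y
  have u0_near: "\<bar>u0 y - 1\<bar> \<le> 1/48" for y
  proof -
    have "\<bar>c * min \<delta> (max 0 y)\<bar> \<le> \<bar>c\<bar> * \<delta>"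
      using \<delta>_bounds by (simp add: abs_mult mult_left_mono)
    then show ?thesis
      using abs_c_\<delta>_le by (simp add: u0_def)
  qed
  have bc: "(\<lambda>y. u0 y / \<omega> y) \<in> bcontfun"
  proof (rule bcontfun_normI)
    show "continuous_on UNIV (\<lambda>y. u0 y / \<omega> y)"
      unfolding u0_def using \<omega>_props(1,5)
      by (intro continuous_intros) (auto simp: less_imp_neq[symmetric])
    fix y
    have "\<bar>u0 y\<bar> \<le> 2"
      using u0_near[of y] by linarith
    then have "\<bar>u0 y\<bar> / \<omega> y \<le> 2 / 1"
      using \<omega>_props(2)[of y] by (intro frac_le) auto
    then show "norm (u0 y / \<omega> y) \<le> 2"
      using \<omega>_props(1)[of y] by (simp add: abs_divide)
  qed
  define v0 where "v0 = Bcontfun (\<lambda>y. u0 y / \<omega> y)"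
  have v0: "\<omega> y * apply_bcontfun v0 y = u0 y" for y
    unfolding v0_def Bcontfun_inverse[OF bc] using \<omega>_props(1)[of y] by simp
  have "v0 \<in> adm"
    unfolding adm_def mem_Collect_eq v0
  proof (intro conjI allI impI)
    fix y :: real
    assume "y \<le> 0"
    then show "apply_bcontfun v0 y = 1"
      using v0[of y] \<omega>_props(3)[of y] \<delta>_bounds by (simp add: u0_def)
  next
    fix y :: real
    show "m y \<le> u0 y" "u0 y \<le> Hmax"
      using u0_near[of y] m_props(2)[of y] Hmax_ge by linarith+
  next
    fix y :: real
    assume "0 \<le> y \<and> y \<le> \<delta>"
    then show "\<bar>u0 y - 1 - c * y\<bar> \<le> K * y\<^sup>2"
      using K_nonneg by (simp add: u0_def)
  qed
  then show ?thesis
    by blast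
qed

theorem exists_half_line_sol: "\<exists>u. half_line_sol H \<rho> u \<and> near0_expansion H \<rho> u \<delta> K"
proof -
  have "\<exists>!v\<in>adm. T v = v"
  proof (rule Banach_fix)
    show "complete adm"
      using adm_closed by (simp add: complete_eq_closed)
  qed (use adm_nonempty la_\<kappa> T_adm T_contraction in auto)
  then obtain v where v: "v \<in> adm" "T v = v"
    by blast
  note u = adm_props[OF v(1)]
  have "unweight v y = integral {0..y} (\<lambda>s. slope H (Q s) (unweight v s)) / y" if "0 < y" for y
    using unweight_T[OF v(1), of y] v(2) that by (simp add: avg_slope_def)
  then have "half_line_sol H \<rho> (unweight v)"
    unfolding half_line_sol_def using u continuous_on_subset[OF u(6)] by auto
  moreover have "near0_expansion H \<rho> (unweight v) \<delta> K"
    unfolding near0_expansion_def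
  proof (intro allI impI conjI)
    fix y :: real
    assume "0 \<le> y \<and> y \<le> \<delta>"
    then show "\<bar>unweight v y - (1 + c * y)\<bar> \<le> K * y\<^sup>2"
      "\<bar>slope H (Q y) (unweight v y) - (1 + 2 * c * y)\<bar> \<le> K * y\<^sup>2"
      using u(4)[of y] near0_slope[of y] by (simp_all add: algebra_simps)
  qed
  ultimately show ?thesis
    by blast
qed

lemma half_line_solD:
  assumes "half_line_sol H \<rho> u"
  shows "continuous_on {0..} u" "u 0 = 1" "\<And>y. 0 \<le> y \<Longrightarrow> 0 < u y"
    "\<And>y. 0 < y \<Longrightarrow> u y = integral {0..y} (\<lambda>s. slope H (Q s) (u s)) / y"
  using assms unfolding half_line_sol_def by auto

lemma half_line_sol_diff_le:
  assumes u: "half_line_sol H \<rho> u" and v: "half_line_sol H \<rho> v"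
    and "0 < y" "0 < d" "0 < r" "0 \<le> L'" "0 \<le> M"
    and dist: "\<And>s. s \<in> {0..y} \<Longrightarrow> \<bar>u s - v s\<bar> \<le> M * exp (r * s)"
    and far: "\<And>s. s \<in> {0..y} \<Longrightarrow> b / (Q s * u s * v s) \<le> L'"
    and near: "\<And>s. s \<in> {0..y} \<Longrightarrow> s \<le> d \<Longrightarrow> b / (Q s * u s * v s) \<le> \<kappa>1"
  shows "\<bar>u y - v y\<bar> \<le> (\<kappa>1 + L' / (r * d)) * M * exp (r * y)"
proof -
  note u' = half_line_solD[OF u] and v' = half_line_solD[OF v]
  have "\<bar>integral {0..y} (\<lambda>s. slope H (Q s) (u s)) - integral {0..y} (\<lambda>s. slope H (Q s) (v s))\<bar>
      \<le> (\<kappa>1 + L' / (r * d)) * M * exp (r * y) * y"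
  proof (rule integral_slope_diff_le[OF H_pos H_le assms(4,5) _ assms(6,7,3) continuous_on_qpoly])
    show "continuous_on {0..y} u" "continuous_on {0..y} v"
      using u'(1) v'(1) by (auto elim: continuous_on_subset)
  qed (use \<kappa>1_bounds Q_pos u'(3) v'(3) dist far near in \<open>auto simp: b_def\<close>)
  then have "\<bar>u y - v y\<bar> * y \<le> (\<kappa>1 + L' / (r * d)) * M * exp (r * y) * y"
    using u'(4)[OF assms(3)] v'(4)[OF assms(3)] assms(3)
    by (simp add: abs_mult flip: diff_divide_distrib)
  then show ?thesis
    using assms(3) by simp
qed

lemma half_line_sol_near0_contraction:
  assumes u: "half_line_sol H \<rho> u" and v: "half_line_sol H \<rho> v"
  obtains d where "0 < d" "\<And>s. 0 \<le> s \<Longrightarrow> s \<le> d \<Longrightarrow> b / (Q s * u s * v s) \<le> \<kappa>1"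
proof -
  note u' = half_line_solD[OF u] and v' = half_line_solD[OF v]
  define g where "g s = Q s * u s * v s" for s
  have "continuous (at 0 within {0..}) g"
    unfolding g_def using u'(1) v'(1)
    by (intro continuous_intros) (auto simp: continuous_on_eq_continuous_within isCont_qpoly
        intro: continuous_at_imp_continuous_within)
  moreover have "0 < 1 - b / \<kappa>1"
    using \<kappa>1_bounds by simp
  ultimately obtain d where d: "0 < d" "\<And>s. s \<in> {0..} \<Longrightarrow> dist s 0 < d \<Longrightarrow> dist (g s) (g 0) < 1 - b / \<kappa>1"
    unfolding continuous_within_eps_delta by blast
  show ?thesis
  proof (rule that[of "d / 2"])
    show "0 < d / 2"
      using d by simp
    fix s
    assume s: "0 \<le> s" "s \<le> d / 2"
    have "g 0 = 1"
      by (simp add: g_def u'(2) v'(2))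
    then have "b / \<kappa>1 < g s"
      using d(2)[of s] d(1) s by (simp add: dist_real_def abs_less_iff)
    moreover have "0 \<le> b / \<kappa>1"
      using b_bounds \<kappa>1_bounds by simp
    ultimately have "0 < g s" "b < g s * \<kappa>1"
      using \<kappa>1_bounds pos_divide_less_eq[of \<kappa>1 b "g s"] by auto
    then show "b / (Q s * u s * v s) \<le> \<kappa>1"
      unfolding g_def by (simp add: divide_le_eq mult.commute)
  qed
qed

lemma half_line_sol_ratio_bounded:
  assumes u: "half_line_sol H \<rho> u" and v: "half_line_sol H \<rho> v" and "0 \<le> Y"
  obtains L' where "0 \<le> L'" "\<And>s. s \<in> {0..Y} \<Longrightarrow> b / (Q s * u s * v s) \<le> L'"
proof -
  note u' = half_line_solD[OF u] and v' = half_line_solD[OF v]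
  have min_cont: "continuous_on {0..Y} (\<lambda>s. min (u s) (v s))"
    using u'(1) v'(1) by (intro continuous_on_min) (auto elim: continuous_on_subset)
  obtain x where x: "x \<in> {0..Y}" "\<And>s. s \<in> {0..Y} \<Longrightarrow> min (u x) (v x) \<le> min (u s) (v s)"
    using continuous_attains_inf[OF compact_Icc _ min_cont] assms(3) by auto
  define \<mu> where "\<mu> = min (u x) (v x)"
  have \<mu>: "0 < \<mu>"
    using u'(3) v'(3) x(1) by (simp add: \<mu>_def)
  show ?thesis
  proof (rule that[of "b / (q0 * \<mu> * \<mu>)"])
    show "0 \<le> b / (q0 * \<mu> * \<mu>)"
      using b_bounds q0_pos \<mu> by simp
    fix s
    assume s: "s \<in> {0..Y}"
    then have \<mu>_le: "\<mu> \<le> u s" "\<mu> \<le> v s"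
      using x(2) by (auto simp: \<mu>_def)
    have "q0 * \<mu> \<le> Q s * u s"
      using Q_pos[of s] \<mu>_le \<mu> by (intro mult_mono) auto
    then have "q0 * \<mu> * \<mu> \<le> Q s * u s * v s"
      using Q_pos[of s] \<mu>_le \<mu> by (intro mult_mono) auto
    moreover have "0 < q0 * \<mu> * \<mu>"
      using q0_pos \<mu> by simp
    ultimately show "b / (Q s * u s * v s) \<le> b / (q0 * \<mu> * \<mu>)"
      using b_bounds by (intro divide_left_mono) auto
  qed
qed

(* A Gronwall-type argument: the weighted difference |u - v| exp (- r s) on [0, Y] is bounded by a
   factor < 1 times its own maximum. *)
theorem half_line_sol_unique:
  assumes u: "half_line_sol H \<rho> u" and v: "half_line_sol H \<rho> v" and "0 \<le> Y"
  shows "u Y = v Y"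
proof -
  note u' = half_line_solD[OF u] and v' = half_line_solD[OF v]
  obtain d where d: "0 < d" "\<And>s. 0 \<le> s \<Longrightarrow> s \<le> d \<Longrightarrow> b / (Q s * u s * v s) \<le> \<kappa>1"
    using half_line_sol_near0_contraction[OF u v] by blast
  obtain L' where L': "0 \<le> L'" "\<And>s. s \<in> {0..Y} \<Longrightarrow> b / (Q s * u s * v s) \<le> L'"
    using half_line_sol_ratio_bounded[OF u v assms(3)] by blast
  obtain r where r: "0 < r" "\<kappa>1 + L' / (r * d) < 1"
    using exists_contraction_rate[of \<kappa>1 L' d] \<kappa>1_bounds L' d by auto
  define w where "w s = \<bar>u s - v s\<bar> * exp (- r * s)" for s
  have w_cont: "continuous_on {0..Y} w"
    unfolding w_def using u'(1) v'(1) by (intro continuous_intros) (auto elim: continuous_on_subset)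
  obtain z where z: "z \<in> {0..Y}" "\<And>s. s \<in> {0..Y} \<Longrightarrow> w s \<le> w z"
    using continuous_attains_sup[OF compact_Icc _ w_cont] assms(3) by auto
  define M where "M = w z"
  have M: "0 \<le> M"
    by (simp add: M_def w_def)
  have dist: "\<bar>u s - v s\<bar> \<le> M * exp (r * s)" if "s \<in> {0..Y}" for s
  proof -
    have "\<bar>u s - v s\<bar> = w s * exp (r * s)"
      by (simp add: w_def mult.assoc flip: exp_add)
    then show ?thesis
      using z(2)[OF that] by (simp add: M_def)
  qed
  have "w y \<le> (\<kappa>1 + L' / (r * d)) * M" if "y \<in> {0..Y}" for y
  proof (cases "y = 0")
    case True
    then show ?thesis
      using u'(2) v'(2) \<kappa>1_bounds L' r d M by (simp add: w_def)
  next
    case False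
    then have "\<bar>u y - v y\<bar> \<le> (\<kappa>1 + L' / (r * d)) * M * exp (r * y)"
      using that d r L' M dist
      by (intro half_line_sol_diff_le[OF u v]) auto
    then have "w y \<le> (\<kappa>1 + L' / (r * d)) * M * exp (r * y) * exp (- r * y)"
      unfolding w_def by (intro mult_right_mono) auto
    then show ?thesis
      by (simp add: mult.assoc flip: exp_add)
  qed
  then have "M \<le> (\<kappa>1 + L' / (r * d)) * M"
    using z(1) by (simp add: M_def)
  then have "M = 0"
    using r M by (simp add: mult_le_cancel_right1)
  then have "w Y \<le> 0"
    using z(2)[of Y] assms(3) by (simp add: M_def)
  then show ?thesis
    by (simp add: w_def mult_le_0_iff)
qed

lemma slope_poly_limit_at0:
  assumes "(V \<longlongrightarrow> d) (at_right 0)" "(k \<longlongrightarrow> d) (at_right 0)" "0 < d"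
    and "eventually (\<lambda>y. slope_poly H (Q y) (V y) (k y) = 0) (at_right 0)"
  shows "d = 1"
proof -
  have "(Q \<longlongrightarrow> Q 0) (at 0)"
    using isCont_qpoly[where y = 0] by (simp add: isCont_def)
  then have "(Q \<longlongrightarrow> 1) (at_right 0)"
    by (simp add: filterlim_at_split)
  then have "((\<lambda>y. slope_poly H (Q y) (V y) (k y)) \<longlongrightarrow> slope_poly H 1 d d) (at_right 0)"
    unfolding slope_poly_def using assms(1,2) by (intro tendsto_intros)
  moreover have "((\<lambda>y. slope_poly H (Q y) (V y) (k y)) \<longlongrightarrow> 0) (at_right 0)"
    using assms(4) by (rule tendsto_eventually)
  ultimately have "slope_poly H 1 d d = 0"
    using tendsto_unique trivial_limit_at_right_real by blast
  then have "d * (d\<^sup>2 - 1) = 0"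
    unfolding slope_poly_def by (simp add: algebra_simps power2_eq_square)
  then show ?thesis
    using assms(3) by (simp add: power2_eq_1_iff)
qed

lemma ode_half_line_sol:
  fixes F k :: "real \<Rightarrow> real"
  assumes F0: "F 0 = 0" and F_deriv: "\<And>y. 0 \<le> y \<Longrightarrow> (F has_real_derivative k y) (at y)"
    and k_cont: "continuous_on {0..} k" and k_pos: "\<And>y. 0 \<le> y \<Longrightarrow> 0 < k y"
    and eq: "\<And>y. 0 < y \<Longrightarrow> F y \<noteq> 0 \<and> (k y)\<^sup>2 * Q y = 1 - (1 - 2 * H) * (1 - y * k y / F y)"
  shows "half_line_sol H \<rho> (\<lambda>y. if y = 0 then 1 else F y / y)"
proof -
  define V where "V y = (if y = 0 then k 0 else F y / y)" for y
  have V_cont: "continuous_on {0..} V"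
    unfolding V_def using F0 F_deriv by (rule continuous_on_difference_quotient_Ici)
  have V_pos: "0 < V y" if y: "0 \<le> y" for y
  proof (cases "y = 0")
    case False
    obtain z where "0 < z" "z < y" "F y - F 0 = (y - 0) * k z"
      using MVT2[of 0 y F k] y False F_deriv by auto
    then show ?thesis
      using k_pos[of z] F0 False by (simp add: V_def)
  qed (use k_pos in \<open>simp add: V_def\<close>)
  have k_root: "slope_poly H (Q y) (V y) (k y) = 0" if "0 < y" for y
    using eq[OF that] that unfolding V_def slope_poly_def by (simp add: field_simps power2_eq_square)
  have "(V \<longlongrightarrow> V 0) (at_right 0)" "(k \<longlongrightarrow> k 0) (at_right 0)"
    using V_cont k_cont by (simp_all add: continuous_on_def flip: at_within_Ici_at_right)
  then have k0: "k 0 = 1"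
    using k_pos[of 0] k_root
    by (intro slope_poly_limit_at0[where V = V and k = k]) (auto simp: V_def eventually_at_filter)
  have "V y = integral {0..y} (\<lambda>s. slope H (Q s) (V s)) / y" if "0 < y" for y
  proof -
    have "(k has_integral (F y - F 0)) {0..y}"
      using that F_deriv
      by (intro fundamental_theorem_of_calculus)
        (auto simp: has_real_derivative_iff_has_vector_derivative[symmetric] intro: has_field_derivative_at_within)
    moreover have "integral {0..y} k = integral {0..y} (\<lambda>s. slope H (Q s) (V s))"
    proof (rule integral_spike[of "{0}"])
      show "slope H (Q s) (V s) = k s" if "s \<in> {0..y} - {0}" for s
        using k_root[of s] V_pos[of s] k_pos[of s] that H_pos Q_pos(1) slope_poly_eq_0_iff by auto
    qed auto
    ultimately show ?thesis
      using that F0 by (simp add: V_def integral_unique)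
  qed
  moreover have "V = (\<lambda>y. if y = 0 then 1 else F y / y)"
    using k0 by (simp add: V_def fun_eq_iff)
  ultimately show ?thesis
    unfolding half_line_sol_def using V_cont V_pos by simp
qed

lemma ode_sol_half_line_sol:
  assumes "ode_sol H \<rho> f"
  shows "half_line_sol H \<rho> (\<lambda>y. if y = 0 then 1 else f y / y)"
proof (rule ode_half_line_sol)
  note f = ode_solD[OF assms]
  show "f 0 = 0" "(f has_real_derivative deriv f y) (at y)" for y
    using f by auto
  show "continuous_on {0..} (deriv f)"
    using f(2) by (rule continuous_on_subset) simp
  show "0 < deriv f y" for y
    using ode_sol_deriv_pos[OF H_pos assms] .
  show "f y \<noteq> 0 \<and> (deriv f y)\<^sup>2 * Q y = 1 - (1 - 2 * H) * (1 - y * deriv f y / f y)" if "0 < y" for y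
    using f(5) that by simp
qed

end

section \<open>Gluing the two half-lines\<close>

locale glued =
  fixes H \<rho> \<delta> K :: real and uA uB :: "real \<Rightarrow> real"
  assumes H_pos: "0 < H" and H_le: "H \<le> 1/2" and rho: "\<bar>\<rho>\<bar> < 1"
    and uA: "half_line_sol H \<rho> uA" and uB: "half_line_sol H (- \<rho>) uB"
    and \<delta>: "0 < \<delta>" and K: "0 \<le> K"
    and expA: "near0_expansion H \<rho> uA \<delta> K" and expB: "near0_expansion H (- \<rho>) uB \<delta> K"
begin

sublocale A: half_line H \<rho>
  using H_pos H_le rho by unfold_locales

sublocale B: half_line H "- \<rho>"
  using H_pos H_le rho by unfold_locales simp_all

abbreviation "Q \<equiv> qpoly H \<rho>"
abbreviation "c \<equiv> taylor1 H \<rho>"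

definition U :: "real \<Rightarrow> real" where
  "U y = (if y \<le> 0 then uB (- y) else uA y)"

definition h :: "real \<Rightarrow> real" where
  "h y = slope H (Q y) (U y)"

definition g :: "real \<Rightarrow> real" where
  "g y = y * U y"

definition dU :: "real \<Rightarrow> real" where
  "dU y = (if y = 0 then c else (h y - U y) / y)"

definition dQ :: "real \<Rightarrow> real" where
  "dQ y = 2 * \<rho> / (2 * H + 1) + 2 * y / (2 * H + 1)\<^sup>2"

definition dh :: "real \<Rightarrow> real" where
  "dh y = (2 * H * dU y - dQ y * U y * (h y)\<^sup>2 - Q y * dU y * (h y)\<^sup>2) / (2 * Q y * U y * h y - (1 - 2 * H))"

lemma U_right: "0 \<le> y \<Longrightarrow> U y = uA y"
  using A.half_line_solD(2)[OF uA] B.half_line_solD(2)[OF uB] by (auto simp: U_def)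

lemma U_left: "y \<le> 0 \<Longrightarrow> U y = uB (- y)"
  by (simp add: U_def)

lemma U_0: "U 0 = 1"
  using B.half_line_solD(2)[OF uB] by (simp add: U_def)

lemma U_pos: "0 < U y"
  using A.half_line_solD(3)[OF uA, of y] B.half_line_solD(3)[OF uB, of "- y"] by (simp add: U_def)

lemma continuous_U: "continuous_on UNIV U"
proof -
  have "continuous_on {y::real. y \<le> 0} (\<lambda>y. - y)"
    by (intro continuous_intros)
  then have "continuous_on {y \<in> UNIV. y \<le> 0} (\<lambda>y. uB (- y))"
    by (auto intro: continuous_on_compose2[OF B.half_line_solD(1)[OF uB]])
  moreover have "continuous_on {y \<in> UNIV. 0 \<le> y} uA"
    using A.half_line_solD(1)[OF uA] by (simp add: atLeast_def)
  ultimately show ?thesis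
    unfolding U_def[abs_def] using A.half_line_solD(2)[OF uA] B.half_line_solD(2)[OF uB]
    by (intro continuous_on_cases_le[where h = "\<lambda>y. y" and a = 0]) auto
qed

lemma isCont_U: "isCont U y"
  using continuous_U by (simp add: continuous_on_eq_continuous_at)

lemma h_pos: "0 < h y" and slope_poly_h: "slope_poly H (Q y) (U y) (h y) = 0"
  unfolding h_def using H_pos A.Q_pos(1) U_pos by (auto intro: slope_pos slope_poly_slope)

lemma continuous_h: "continuous_on UNIV h"
  unfolding h_def using H_pos A.Q_pos(1) U_pos continuous_U
  by (intro continuous_on_slope continuous_on_qpoly) auto

lemma isCont_h: "isCont h y"
  using continuous_h by (simp add: continuous_on_eq_continuous_at)

lemma expansion:
  assumes "\<bar>y\<bar> \<le> \<delta>"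
  shows "\<bar>U y - (1 + c * y)\<bar> \<le> K * y\<^sup>2" "\<bar>h y - (1 + 2 * c * y)\<bar> \<le> K * y\<^sup>2"
proof -
  have "\<bar>U y - (1 + c * y)\<bar> \<le> K * y\<^sup>2 \<and> \<bar>h y - (1 + 2 * c * y)\<bar> \<le> K * y\<^sup>2"
  proof (cases "0 \<le> y")
    case True
    then show ?thesis
      using expA assms U_right[OF True] by (simp add: near0_expansion_def h_def)
  next
    case False
    then have "U y = uB (- y)" "h y = slope H (qpoly H (- \<rho>) (- y)) (uB (- y))"
      by (simp_all add: U_def h_def qpoly_minus)
    then show ?thesis
      using expB[unfolded near0_expansion_def, rule_format, of "- y"] assms False
      by (simp add: taylor1_minus)
  qed
  then show "\<bar>U y - (1 + c * y)\<bar> \<le> K * y\<^sup>2" "\<bar>h y - (1 + 2 * c * y)\<bar> \<le> K * y\<^sup>2"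
    by auto
qed

lemma h_0: "h 0 = 1"
  using expansion(2)[of 0] \<delta> by simp

lemma g_has_derivative_pos:
  assumes "0 < y"
  shows "(g has_real_derivative h y) (at y)"
proof -
  define hA where "hA s = slope H (Q s) (uA s)" for s
  have "continuous_on {0..} hA"
    unfolding hA_def using H_pos A.Q_pos(1) A.half_line_solD[OF uA]
    by (intro continuous_on_slope continuous_on_qpoly) auto
  from has_real_derivative_integral_Icc0[OF this assms]
  have "(g has_real_derivative hA y) (at y)"
  proof (rule has_field_derivative_transform_within_open[where S = "{0<..}"])
    show "integral {0..t} hA = g t" if "t \<in> {0<..}" for t
      using A.half_line_solD(4)[OF uA, of t] that U_right[of t] by (simp add: g_def hA_def[abs_def])
  qed (use assms in auto)
  then show ?thesis
    using U_right[of y] assms by (simp add: hA_def h_def)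
qed

lemma g_has_derivative_neg:
  assumes "y < 0"
  shows "(g has_real_derivative h y) (at y)"
proof -
  define hB where "hB s = slope H (qpoly H (- \<rho>) s) (uB s)" for s
  have "continuous_on {0..} hB"
    unfolding hB_def using H_pos B.Q_pos(1) B.half_line_solD[OF uB]
    by (intro continuous_on_slope continuous_on_qpoly) auto
  from has_real_derivative_integral_Icc0[OF this, of "- y"] assms
  have "((\<lambda>t. integral {0..t} hB) has_real_derivative hB (- y)) (at (- y))"
    by simp
  then have "((\<lambda>t. - integral {0..- t} hB) has_real_derivative hB (- y)) (at y)"
    using DERIV_minus[OF DERIV_chain2[where g = "\<lambda>t. - t", OF _ DERIV_minus[OF DERIV_ident]]] by simp
  then have "(g has_real_derivative hB (- y)) (at y)"
  proof (rule has_field_derivative_transform_within_open[where S = "{..<0}"])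
    show "- integral {0..- t} hB = g t" if "t \<in> {..<0}" for t
      using B.half_line_solD(4)[OF uB, of "- t"] that U_left[of t]
      by (simp add: g_def hB_def[abs_def] field_simps)
  qed (use assms in auto)
  then show ?thesis
    using U_left[of y] assms by (simp add: hB_def h_def qpoly_minus)
qed

lemma g_has_derivative: "(g has_real_derivative h y) (at y)"
proof -
  consider "0 < y" | "y < 0" | "y = 0"
    by linarith
  then show ?thesis
  proof cases
    case 3
    have "(U \<longlongrightarrow> 1) (at 0)"
      using isCont_U[of 0] U_0 by (simp add: isCont_def)
    moreover have "eventually (\<lambda>t. U t = (g t - g 0) / (t - 0)) (at 0)"
      by (simp add: eventually_at_filter g_def)
    ultimately have "((\<lambda>t. (g t - g 0) / (t - 0)) \<longlongrightarrow> 1) (at 0)"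
      by (rule Lim_transform_eventually)
    then show ?thesis
      using 3 h_0 by (simp add: has_field_derivative_iff)
  qed (auto intro: g_has_derivative_pos g_has_derivative_neg)
qed

lemma deriv_g: "deriv g = h"
  using g_has_derivative by (simp add: fun_eq_iff DERIV_imp_deriv)

lemma U_has_derivative: "(U has_real_derivative dU y) (at y)"
proof (cases "y = 0")
  case True
  have "(U has_real_derivative c) (at 0)"
  proof (rule has_real_derivative_at0I[OF \<delta>])
    fix t :: real
    assume "\<bar>t\<bar> < \<delta>"
    then show "\<bar>U t - U 0 - c * t\<bar> \<le> K * t\<^sup>2"
      using expansion(1)[of t] U_0 by (simp add: algebra_simps)
  qed
  then show ?thesis
    using True by (simp add: dU_def)
next
  case False
  have "((\<lambda>t. g t / t) has_real_derivative (h y * y - g y * 1) / (y * y)) (at y)"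
    using DERIV_divide[OF g_has_derivative DERIV_ident] False by simp
  then have "(U has_real_derivative (h y * y - g y * 1) / (y * y)) (at y)"
  proof (rule has_field_derivative_transform_within_open[where S = "- {0}"])
    show "g t / t = U t" if "t \<in> - {0}" for t
      using that by (simp add: g_def)
  qed (use False in auto)
  moreover have "(h y * y - g y * 1) / (y * y) = dU y"
    using False by (simp add: dU_def g_def field_simps)
  ultimately show ?thesis
    by simp
qed

lemma Q_has_derivative: "(Q has_real_derivative dQ y) (at y)"
  unfolding dQ_def by (rule qpoly_has_real_derivative)

lemma slope_poly_dh_pos_h: "0 < 2 * Q y * U y * h y - (1 - 2 * H)"
  unfolding h_def using H_pos A.Q_pos(1) U_pos by (rule slope_poly_dh_pos)

lemma h_has_derivative: "(h has_real_derivative dh y) (at y)"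
  unfolding dh_def using slope_poly_h slope_poly_dh_pos_h[of y]
  by (intro slope_poly_implicit_deriv[OF isCont_h U_has_derivative Q_has_derivative]) auto

lemma deriv_h: "deriv h = dh"
  using h_has_derivative by (simp add: fun_eq_iff DERIV_imp_deriv)

lemma dh_0: "dh 0 = 2 * c"
proof -
  have "(h has_real_derivative 2 * c) (at 0)"
  proof (rule has_real_derivative_at0I[OF \<delta>])
    fix t :: real
    assume "\<bar>t\<bar> < \<delta>"
    then show "\<bar>h t - h 0 - 2 * c * t\<bar> \<le> K * t\<^sup>2"
      using expansion(2)[of t] h_0 by (simp add: algebra_simps)
  qed
  then show ?thesis
    using DERIV_unique[OF h_has_derivative] by blast
qed

lemma lip_at0_of_expansion:
  assumes "\<And>t. \<bar>t\<bar> \<le> \<delta> \<Longrightarrow> \<bar>f t - (1 + a * t)\<bar> \<le> K * t\<^sup>2"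
  shows "lip_at0 f 1"
proof (rule lip_at0I[of "min \<delta> 1" _ _ "K + \<bar>a\<bar>"])
  show "0 < min \<delta> 1"
    using \<delta> by simp
  fix t :: real
  assume t: "t \<noteq> 0" "\<bar>t\<bar> < min \<delta> 1"
  have "\<bar>f t - 1\<bar> \<le> \<bar>f t - (1 + a * t)\<bar> + \<bar>a\<bar> * \<bar>t\<bar>"
    using abs_triangle_ineq[of "f t - (1 + a * t)" "a * t"] by (simp add: abs_mult)
  moreover have "\<bar>f t - (1 + a * t)\<bar> \<le> K * t\<^sup>2"
    using assms t by simp
  moreover have "K * t\<^sup>2 \<le> K * \<bar>t\<bar>"
    using K t power2_le_abs_of_le_1[of t] by (intro mult_left_mono) auto
  moreover have "(K + \<bar>a\<bar>) * \<bar>t\<bar> = K * \<bar>t\<bar> + \<bar>a\<bar> * \<bar>t\<bar>"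
    by (simp add: algebra_simps)
  ultimately show "\<bar>f t - 1\<bar> \<le> (K + \<bar>a\<bar>) * \<bar>t\<bar>"
    by linarith
qed

lemma lip_at0_U: "lip_at0 U (U 0)"
  using lip_at0_of_expansion[OF expansion(1)] U_0 by simp

lemma lip_at0_h: "lip_at0 h (h 0)"
  using lip_at0_of_expansion[of h "2 * c"] expansion(2) h_0 by (simp add: mult.assoc)

lemma lip_at0_dU: "lip_at0 dU (dU 0)"
proof (rule lip_at0I[OF \<delta>, of _ _ "2 * K"])
  fix t :: real
  assume t: "t \<noteq> 0" "\<bar>t\<bar> < \<delta>"
  have "dU t - c = ((h t - (1 + 2 * c * t)) - (U t - (1 + c * t))) / t"
    using t by (simp add: dU_def field_simps)
  then have "\<bar>dU t - c\<bar> = \<bar>(h t - (1 + 2 * c * t)) - (U t - (1 + c * t))\<bar> / \<bar>t\<bar>"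
    by (simp add: abs_divide)
  also have "\<dots> \<le> (2 * K * t\<^sup>2) / \<bar>t\<bar>"
  proof (rule divide_right_mono)
    show "\<bar>(h t - (1 + 2 * c * t)) - (U t - (1 + c * t))\<bar> \<le> 2 * K * t\<^sup>2"
      using expansion[of t] t abs_triangle_ineq4[of "h t - (1 + 2 * c * t)" "U t - (1 + c * t)"]
      by simp
  qed simp
  also have "\<dots> = 2 * K * \<bar>t\<bar>"
    using t
    by (metis abs_mult_self_eq divide_divide_eq_right nonzero_mult_div_cancel_right
        power2_eq_square times_divide_eq_right zero_less_abs_iff less_irrefl)
  finally show "\<bar>dU t - dU 0\<bar> \<le> 2 * K * \<bar>t\<bar>"
    by (simp add: dU_def)
qed

lemma isCont_dU: "isCont dU y"
proof (cases "y = 0")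
  case True
  then show ?thesis
    using lip_at0_tendsto[OF lip_at0_dU] by (simp add: isCont_def)
next
  case False
  have "isCont (\<lambda>t. (h t - U t) / t) y"
    using False by (intro continuous_intros isCont_h isCont_U) auto
  moreover have "eventually (\<lambda>t. t \<noteq> 0) (nhds y)"
    using eventually_nhds_in_open[of "- {0}" y] False by auto
  then have "eventually (\<lambda>t. (h t - U t) / t = dU t) (nhds y)"
    by (rule eventually_mono) (simp add: dU_def)
  ultimately show ?thesis
    by (subst (asm) isCont_cong) auto
qed

lemma isCont_dQ: "isCont dQ y"
  unfolding dQ_def by (intro continuous_intros) (use H_pos in auto)

lemma continuous_dh: "continuous_on UNIV dh"
proof (intro continuous_at_imp_continuous_on ballI)
  fix y :: real
  show "isCont dh y"
    unfolding dh_def using slope_poly_dh_pos_h[of y]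
    by (intro continuous_intros isCont_dU isCont_dQ isCont_qpoly isCont_U isCont_h) auto
qed

lemma lip_at0_Q: "lip_at0 Q (Q 0)"
proof -
  have "Q = (\<lambda>s. 1 + 2 * \<rho> / (2 * H + 1) * s + 1 / (2 * H + 1)\<^sup>2 * (s * s))"
    by (simp add: fun_eq_iff qpoly_def power2_eq_square)
  moreover have "lip_at0 (\<lambda>s. 1 + 2 * \<rho> / (2 * H + 1) * s + 1 / (2 * H + 1)\<^sup>2 * (s * s))
      (1 + 2 * \<rho> / (2 * H + 1) * 0 + 1 / (2 * H + 1)\<^sup>2 * (0 * 0))"
    by (intro lip_at0_add lip_at0_mult lip_at0_const lip_at0_ident)
  ultimately show ?thesis
    by simp
qed

lemma lip_at0_dQ: "lip_at0 dQ (dQ 0)"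
proof -
  have "dQ = (\<lambda>s. 2 * \<rho> / (2 * H + 1) + 2 / (2 * H + 1)\<^sup>2 * s)"
    by (simp add: fun_eq_iff dQ_def)
  moreover have "lip_at0 (\<lambda>s. 2 * \<rho> / (2 * H + 1) + 2 / (2 * H + 1)\<^sup>2 * s)
      (2 * \<rho> / (2 * H + 1) + 2 / (2 * H + 1)\<^sup>2 * 0)"
    by (intro lip_at0_add lip_at0_mult lip_at0_const lip_at0_ident)
  ultimately show ?thesis
    by (simp add: dQ_def)
qed

lemma lip_at0_dh: "lip_at0 dh (dh 0)"
proof -
  have "lip_at0 (\<lambda>y. (2 * H * dU y - dQ y * U y * (h y * h y) - Q y * dU y * (h y * h y)) /
      (2 * Q y * U y * h y - (1 - 2 * H)))
    ((2 * H * dU 0 - dQ 0 * U 0 * (h 0 * h 0) - Q 0 * dU 0 * (h 0 * h 0)) /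
      (2 * Q 0 * U 0 * h 0 - (1 - 2 * H)))"
    using slope_poly_dh_pos_h[of 0]
    by (intro lip_at0_divide lip_at0_diff lip_at0_mult lip_at0_const lip_at0_dU lip_at0_U lip_at0_h
        lip_at0_Q lip_at0_dQ) auto
  then show ?thesis
    by (simp add: dh_def[abs_def] power2_eq_square)
qed

theorem ode_sol_g: "ode_sol H \<rho> g"
  unfolding ode_sol_def C1_real_def deriv_g
proof (intro conjI allI impI)
  show "g differentiable (at y)" for y
    using g_has_derivative by (auto simp: real_differentiable_def)
  show "continuous_on UNIV h" "g 0 = 0" "0 < h 0"
    using continuous_h h_0 by (simp_all add: g_def)
  fix y :: real
  assume y: "y \<noteq> 0"
  show "g y \<noteq> 0"
    using y U_pos[of y] by (simp add: g_def)
  have "(h y)\<^sup>2 * Q y = 2 * H + (1 - 2 * H) * h y / U y"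
    using slope_poly_h[of y] U_pos[of y] by (simp add: slope_poly_def field_simps)
  also have "\<dots> = 1 - (1 - 2 * H) * (1 - y * h y / g y)"
    using U_pos[of y] y by (simp add: g_def field_simps)
  finally show "(h y)\<^sup>2 * (1 + 2 * \<rho> * y / (2 * H + 1) + y\<^sup>2 / (2 * H + 1)\<^sup>2)
      = 1 - (1 - 2 * H) * (1 - y * h y / g y)"
    by (simp add: qpoly_def)
qed

theorem C2_g: "C2_real g"
  unfolding C2_real_def deriv_g
proof
  show "C1_real g"
    using ode_sol_g by (simp add: ode_sol_def)
  show "C1_real h"
    unfolding C1_real_def deriv_h using h_has_derivative continuous_dh
    by (auto simp: real_differentiable_def)
qed

theorem ode_sol_unique:
  assumes f: "ode_sol H \<rho> f"
  shows "f = g"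
proof
  fix y :: real
  show "f y = g y"
  proof (cases "0 \<le> y")
    case True
    have "(if y = 0 then 1 else f y / y) = uA y"
      using A.half_line_sol_unique[OF A.ode_sol_half_line_sol[OF f] uA True] by simp
    then show ?thesis
      using True U_right[OF True] ode_solD(3)[OF f] by (auto simp: g_def field_simps split: if_splits)
  next
    case False
    have "(if - y = 0 then 1 else - f (- (- y)) / - y) = uB (- y)"
      using B.half_line_sol_unique[OF B.ode_sol_half_line_sol[OF ode_sol_reflect[OF f]] uB, of "- y"]
        False by simp
    then have "f y / y = uB (- y)"
      using False by simp
    then show ?thesis
      using False U_left[of y] by (simp add: g_def field_simps)
  qed
qed

lemma g_taylor: "(\<lambda>y. g y - (y + c * y\<^sup>2)) \<in> O[at 0](\<lambda>y. y ^ 3)"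
proof (rule bigoI)
  show "eventually (\<lambda>y. norm (g y - (y + c * y\<^sup>2)) \<le> K * norm (y ^ 3)) (at 0)"
    unfolding eventually_at
  proof (intro exI[of _ \<delta>] conjI ballI impI)
    fix y :: real
    assume "y \<noteq> 0 \<and> dist y 0 < \<delta>"
    then have "\<bar>U y - (1 + c * y)\<bar> \<le> K * y\<^sup>2"
      by (intro expansion) (simp add: dist_real_def)
    then have "\<bar>y\<bar> * \<bar>U y - (1 + c * y)\<bar> \<le> \<bar>y\<bar> * (K * y\<^sup>2)"
      by (intro mult_left_mono) auto
    moreover have "g y - (y + c * y\<^sup>2) = y * (U y - (1 + c * y))"
      by (simp add: g_def algebra_simps power2_eq_square)
    ultimately show "norm (g y - (y + c * y\<^sup>2)) \<le> K * norm (y ^ 3)"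
      by (simp add: abs_mult power2_eq_square power3_eq_cube mult.left_commute)
  qed (use \<delta> in auto)
qed

lemma h_taylor: "(\<lambda>y. h y - (1 + 2 * c * y)) \<in> O[at 0](\<lambda>y. y\<^sup>2)"
proof (rule bigoI)
  show "eventually (\<lambda>y. norm (h y - (1 + 2 * c * y)) \<le> K * norm (y\<^sup>2)) (at 0)"
    unfolding eventually_at using expansion(2) \<delta>
    by (intro exI[of _ \<delta>]) (auto simp: dist_real_def)
qed

end

theorem lemmaA2:
  fixes H \<rho> :: real
  assumes "0 < H" and "H \<le> 1/2" and "-1 < \<rho>" and "\<rho> < 1"
  shows "\<exists>g. ode_sol H \<rho> g \<and> (\<forall>f. ode_sol H \<rho> f \<longrightarrow> f = g) \<and>
     C2_real g \<and>
     (\<lambda>y. g y - (deriv g 0 * y + deriv (deriv g) 0 * y\<^sup>2 / 2)) \<in> O[at 0](\<lambda>y. y ^ 3) \<and>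
     (\<lambda>y. deriv g y - (deriv g 0 + deriv (deriv g) 0 * y)) \<in> O[at 0](\<lambda>y. y\<^sup>2) \<and>
     (\<lambda>y. deriv (deriv g) y - deriv (deriv g) 0) \<in> O[at 0](\<lambda>y. y) \<and>
     (\<forall>y. y \<noteq> 0 \<longrightarrow> g y / y > 0)"
proof -
  interpret A: half_line H \<rho>
    using assms by unfold_locales auto
  interpret B: half_line H "- \<rho>"
    using assms by unfold_locales auto
  obtain uA uB where uA: "half_line_sol H \<rho> uA" "near0_expansion H \<rho> uA A.\<delta> A.K"
    and uB: "half_line_sol H (- \<rho>) uB" "near0_expansion H (- \<rho>) uB B.\<delta> B.K"
    using A.exists_half_line_sol B.exists_half_line_sol by blast
  interpret glued H \<rho> "min A.\<delta> B.\<delta>" "max A.K B.K" uA uB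
    using assms uA uB A.\<delta>_bounds(1) B.\<delta>_bounds(1) A.K_nonneg
    by unfold_locales (auto elim: near0_expansion_mono)
  show ?thesis
  proof (intro exI[of _ g] conjI allI impI)
    show "ode_sol H \<rho> g" "C2_real g"
      by (fact ode_sol_g, fact C2_g)
    show "f = g" if "ode_sol H \<rho> f" for f
      using that by (rule ode_sol_unique)
    show "(\<lambda>y. g y - (deriv g 0 * y + deriv (deriv g) 0 * y\<^sup>2 / 2)) \<in> O[at 0](\<lambda>y. y ^ 3)"
      using g_taylor by (simp add: deriv_g deriv_h h_0 dh_0)
    show "(\<lambda>y. deriv g y - (deriv g 0 + deriv (deriv g) 0 * y)) \<in> O[at 0](\<lambda>y. y\<^sup>2)"
      using h_taylor by (simp add: deriv_g deriv_h h_0 dh_0)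
    show "(\<lambda>y. deriv (deriv g) y - deriv (deriv g) 0) \<in> O[at 0](\<lambda>y. y)"
      using lip_at0_dh by (simp add: deriv_g deriv_h lip_at0_def)
    show "0 < g y / y" if "y \<noteq> 0" for y
      using that U_pos[of y] by (simp add: g_def)
  qed
qed

end
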